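(* Let $H$ be a finite-dimensional Hopf algebra over a field $k$, $R\subseteq H$ a Hopf subalgebra, $Q=H/R^+H$, and let $\ell_Q$ be the stage at which the descending chain of annihilator ideals $\mathrm{Ann}\,Q\supseteq\mathrm{Ann}\,Q^{\otimes 2}\supseteq\cdots$ stabilizes. Then $\sigma[Q^{\otimes \ell_Q}]=\sigma[Q^{\otimes(\ell_Q+n)}]$ for all $n\in\mathbb{N}$.
   Context: $R^+=\ker\varepsilon\cap R$ and $Q=H/R^+H$ is a right $H$-module. $Q^{\otimes n}$ denotes the $n$-fold tensor power in mod-$H$ (tensor over $k$ with diagonal action $(m\otimes n)h=mh_{(1)}\otimes nh_{(2)}$). $\mathrm{Ann}\,M=\{h\in H:Mh=0\}$. $\ell_Q$ is the least $n\ge1$ with $\mathrm{Ann}\,Q^{\otimes n}=\mathrm{Ann}\,Q^{\otimes m}$ for all $m\ge n$. For a module $M$ over a finite-dimensional algebra $C$, $\sigma[M]$ is the full subcategory of mod-$C$ whose objects are submodules of quotients of finite direct sums of copies of $M$. *)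

theory Defs
  imports Main
begin

text \<open>A finite-dimensional Hopf algebra H over a field 'k is given by a finite basis
indexed by a finite type 'i; elements of H are coordinate vectors 'i \<Rightarrow> 'k,
and elements of H \<otimes> H are coordinate vectors ('i \<times> 'i) \<Rightarrow> 'k.
The structure maps are given by their structure constants:
  e_a e_b = \<Sum>_c smul a b c e_c,   1 = \<Sum>_a sunit a e_a,
  \<Delta> e_a = \<Sum>_{b,c} scomul a b c e_b \<otimes> e_c,   \<epsilon> e_a = scounit a,
  S e_a = \<Sum>_b santi a b e_b.\<close>

record ('k,'i) hopf_data =
  smul :: "'i \<Rightarrow> 'i \<Rightarrow> 'i \<Rightarrow> 'k"
  sunit :: "'i \<Rightarrow> 'k"
  scomul :: "'i \<Rightarrow> 'i \<Rightarrow> 'i \<Rightarrow> 'k"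
  scounit :: "'i \<Rightarrow> 'k"
  santi :: "'i \<Rightarrow> 'i \<Rightarrow> 'k"

definition basis_vec :: "'i \<Rightarrow> 'i \<Rightarrow> 'k::field" where
  "basis_vec c = (\<lambda>b. if b = c then 1 else 0)"

definition hmult :: "('k::field,'i::finite) hopf_data \<Rightarrow> ('i \<Rightarrow> 'k) \<Rightarrow> ('i \<Rightarrow> 'k) \<Rightarrow> ('i \<Rightarrow> 'k)" where
  "hmult A x y = (\<lambda>c. \<Sum>a\<in>UNIV. \<Sum>b\<in>UNIV. x a * y b * smul A a b c)"

definition hone :: "('k::field,'i::finite) hopf_data \<Rightarrow> ('i \<Rightarrow> 'k)" where
  "hone A = sunit A"

definition hcomul :: "('k::field,'i::finite) hopf_data \<Rightarrow> ('i \<Rightarrow> 'k) \<Rightarrow> ('i \<times> 'i \<Rightarrow> 'k)" where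
  "hcomul A x = (\<lambda>(b,c). \<Sum>a\<in>UNIV. x a * scomul A a b c)"

definition hcounit :: "('k::field,'i::finite) hopf_data \<Rightarrow> ('i \<Rightarrow> 'k) \<Rightarrow> 'k" where
  "hcounit A x = (\<Sum>a\<in>UNIV. x a * scounit A a)"

definition hanti :: "('k::field,'i::finite) hopf_data \<Rightarrow> ('i \<Rightarrow> 'k) \<Rightarrow> ('i \<Rightarrow> 'k)" where
  "hanti A x = (\<lambda>b. \<Sum>a\<in>UNIV. x a * santi A a b)"

definition tens :: "('i \<Rightarrow> 'k::field) \<Rightarrow> ('i \<Rightarrow> 'k) \<Rightarrow> ('i \<times> 'i \<Rightarrow> 'k)" where
  "tens u v = (\<lambda>(a,b). u a * v b)"

definition tmult :: "('k::field,'i::finite) hopf_data \<Rightarrow> ('i \<times> 'i \<Rightarrow> 'k) \<Rightarrow> ('i \<times> 'i \<Rightarrow> 'k) \<Rightarrow> ('i \<times> 'i \<Rightarrow> 'k)" where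
  "tmult A s t = (\<lambda>(x,y). \<Sum>a\<in>UNIV. \<Sum>b\<in>UNIV. \<Sum>c\<in>UNIV. \<Sum>d\<in>UNIV.
       s (a,b) * t (c,d) * smul A a c x * smul A b d y)"

text \<open>(\<Delta> \<otimes> id) and (id \<otimes> \<Delta>) on H \<otimes> H, landing in H \<otimes> H \<otimes> H\<close>
definition comul_left :: "('k::field,'i::finite) hopf_data \<Rightarrow> ('i \<times> 'i \<Rightarrow> 'k) \<Rightarrow> ('i \<times> 'i \<times> 'i \<Rightarrow> 'k)" where
  "comul_left A t = (\<lambda>(p,q,r). \<Sum>b\<in>UNIV. t (b,r) * scomul A b p q)"

definition comul_right :: "('k::field,'i::finite) hopf_data \<Rightarrow> ('i \<times> 'i \<Rightarrow> 'k) \<Rightarrow> ('i \<times> 'i \<times> 'i \<Rightarrow> 'k)" where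
  "comul_right A t = (\<lambda>(p,q,r). \<Sum>c\<in>UNIV. t (p,c) * scomul A c q r)"

definition hopf_algebra :: "('k::field,'i::finite) hopf_data \<Rightarrow> bool" where
  "hopf_algebra A \<longleftrightarrow>
     (\<forall>x y z. hmult A (hmult A x y) z = hmult A x (hmult A y z)) \<and>
     (\<forall>x. hmult A (hone A) x = x \<and> hmult A x (hone A) = x) \<and>
     (\<forall>x. comul_left A (hcomul A x) = comul_right A (hcomul A x)) \<and>
     (\<forall>x. (\<lambda>q. \<Sum>p\<in>UNIV. hcomul A x (p,q) * scounit A p) = x) \<and>
     (\<forall>x. (\<lambda>p. \<Sum>q\<in>UNIV. hcomul A x (p,q) * scounit A q) = x) \<and>
     (\<forall>x y. hcomul A (hmult A x y) = tmult A (hcomul A x) (hcomul A y)) \<and>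
     hcomul A (hone A) = tens (hone A) (hone A) \<and>
     (\<forall>x y. hcounit A (hmult A x y) = hcounit A x * hcounit A y) \<and>
     hcounit A (hone A) = 1 \<and>
     (\<forall>x. (\<lambda>c. \<Sum>p\<in>UNIV. \<Sum>q\<in>UNIV.
            hcomul A x (p,q) * hmult A (hanti A (basis_vec p)) (basis_vec q) c)
          = (\<lambda>c. hcounit A x * hone A c)) \<and>
     (\<forall>x. (\<lambda>c. \<Sum>p\<in>UNIV. \<Sum>q\<in>UNIV.
            hcomul A x (p,q) * hmult A (basis_vec p) (hanti A (basis_vec q)) c)
          = (\<lambda>c. hcounit A x * hone A c))"

text \<open>R \<otimes> R as a subspace of H \<otimes> H: finite sums of simple tensors of elements of R\<close>
definition tspan :: "('i \<Rightarrow> 'k::field) set \<Rightarrow> ('i \<times> 'i \<Rightarrow> 'k) set" where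
  "tspan R = {t. \<exists>(n::nat) f g. (\<forall>j<n. f j \<in> R \<and> g j \<in> R) \<and>
                    t = (\<lambda>p. \<Sum>j<n. tens (f j) (g j) p)}"

definition hopf_subalgebra :: "('k::field,'i::finite) hopf_data \<Rightarrow> ('i \<Rightarrow> 'k) set \<Rightarrow> bool" where
  "hopf_subalgebra A R \<longleftrightarrow>
     (\<lambda>_. 0) \<in> R \<and>
     (\<forall>x\<in>R. \<forall>y\<in>R. (\<lambda>a. x a + y a) \<in> R) \<and>
     (\<forall>c. \<forall>x\<in>R. (\<lambda>a. c * x a) \<in> R) \<and>
     hone A \<in> R \<and>
     (\<forall>x\<in>R. \<forall>y\<in>R. hmult A x y \<in> R) \<and>
     (\<forall>x\<in>R. hcomul A x \<in> tspan R) \<and>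
     (\<forall>x\<in>R. hanti A x \<in> R)"

definition RplusH :: "('k::field,'i::finite) hopf_data \<Rightarrow> ('i \<Rightarrow> 'k) set \<Rightarrow> ('i \<Rightarrow> 'k) set" where
  "RplusH A R = {x. \<exists>(n::nat) f g. (\<forall>j<n. f j \<in> R \<and> hcounit A (f j) = 0) \<and>
                    x = (\<lambda>c. \<Sum>j<n. hmult A (f j) (g j) c)}"

record ('h,'v) rmod =
  mcar :: "'v set"
  madd :: "'v \<Rightarrow> 'v \<Rightarrow> 'v"
  mzero :: 'v
  mact :: "'v \<Rightarrow> 'h \<Rightarrow> 'v"

definition rmodule :: "('k::field,'i::finite) hopf_data \<Rightarrow> ('i \<Rightarrow> 'k, 'v, 'z) rmod_scheme \<Rightarrow> bool" where
  "rmodule A M \<longleftrightarrow>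
     (\<forall>u\<in>mcar M. \<forall>v\<in>mcar M. madd M u v \<in> mcar M) \<and>
     mzero M \<in> mcar M \<and>
     (\<forall>u\<in>mcar M. \<forall>v\<in>mcar M. \<forall>w\<in>mcar M. madd M (madd M u v) w = madd M u (madd M v w)) \<and>
     (\<forall>u\<in>mcar M. \<forall>v\<in>mcar M. madd M u v = madd M v u) \<and>
     (\<forall>u\<in>mcar M. madd M (mzero M) u = u) \<and>
     (\<forall>u\<in>mcar M. \<exists>w\<in>mcar M. madd M u w = mzero M) \<and>
     (\<forall>u\<in>mcar M. \<forall>h. mact M u h \<in> mcar M) \<and>
     (\<forall>u\<in>mcar M. \<forall>v\<in>mcar M. \<forall>h. mact M (madd M u v) h = madd M (mact M u h) (mact M v h)) \<and>
     (\<forall>u\<in>mcar M. \<forall>h h'. mact M u (\<lambda>a. h a + h' a) = madd M (mact M u h) (mact M u h')) \<and>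
     (\<forall>u\<in>mcar M. \<forall>h h'. mact M u (hmult A h h') = mact M (mact M u h) h') \<and>
     (\<forall>u\<in>mcar M. mact M u (hone A) = u)"

definition submod :: "'v set \<Rightarrow> ('h, 'v, 'z) rmod_scheme \<Rightarrow> bool" where
  "submod N M \<longleftrightarrow> N \<subseteq> mcar M \<and> mzero M \<in> N \<and>
     (\<forall>u\<in>N. \<forall>v\<in>N. madd M u v \<in> N) \<and>
     (\<forall>u\<in>N. \<exists>w\<in>N. madd M u w = mzero M) \<and>
     (\<forall>u\<in>N. \<forall>h. mact M u h \<in> N)"

definition dsum :: "nat \<Rightarrow> ('h, 'v) rmod \<Rightarrow> ('h, nat \<Rightarrow> 'v) rmod" where
  "dsum m M = \<lparr> mcar = {f. (\<forall>j<m. f j \<in> mcar M) \<and> (\<forall>j\<ge>m. f j = mzero M)},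
                madd = (\<lambda>f g j. madd M (f j) (g j)),
                mzero = (\<lambda>j. mzero M),
                mact = (\<lambda>f h j. mact M (f j) h) \<rparr>"

definition mcoset :: "('h, 'v) rmod \<Rightarrow> 'v set \<Rightarrow> 'v \<Rightarrow> 'v set" where
  "mcoset M W v = {madd M v w | w. w \<in> W}"

definition quot :: "('h, 'v) rmod \<Rightarrow> 'v set \<Rightarrow> ('h, 'v set) rmod" where
  "quot M W = \<lparr> mcar = mcoset M W ` mcar M,
                madd = (\<lambda>C D. {madd M c d | c d. c \<in> C \<and> d \<in> D}),
                mzero = W,
                mact = (\<lambda>C h. {madd M (mact M c h) w | c w. c \<in> C \<and> w \<in> W}) \<rparr>"

definition rhom :: "('h, 'v, 'y) rmod_scheme \<Rightarrow> ('h, 'w, 'z) rmod_scheme \<Rightarrow> ('v \<Rightarrow> 'w) \<Rightarrow> bool" where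
  "rhom M N f \<longleftrightarrow> (\<forall>u\<in>mcar M. f u \<in> mcar N) \<and>
     (\<forall>u\<in>mcar M. \<forall>v\<in>mcar M. f (madd M u v) = madd N (f u) (f v)) \<and>
     (\<forall>u\<in>mcar M. \<forall>h. f (mact M u h) = mact N (f u) h)"

definition riso :: "('h, 'v, 'y) rmod_scheme \<Rightarrow> ('h, 'w, 'z) rmod_scheme \<Rightarrow> bool" where
  "riso M N \<longleftrightarrow> (\<exists>f. rhom M N f \<and> bij_betw f (mcar M) (mcar N))"

text \<open>X \<in> \<sigma>[M]: X is isomorphic to a submodule S of a quotient (M^m)/W\<close>
definition in_sigma :: "('h, 'v) rmod \<Rightarrow> ('h, 'x) rmod \<Rightarrow> bool" where
  "in_sigma M X \<longleftrightarrow> (\<exists>m W S. submod W (dsum m M) \<and>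
       submod S (quot (dsum m M) W) \<and>
       riso X ((quot (dsum m M) W)\<lparr>mcar := S\<rparr>))"

definition annih :: "('i \<Rightarrow> 'k) set \<Rightarrow> ('i \<Rightarrow> 'k, 'v) rmod \<Rightarrow> ('i \<Rightarrow> 'k) set" where
  "annih H M = {h \<in> H. \<forall>u\<in>mcar M. mact M u h = mzero M}"

text \<open>H^{\<otimes>n} in coordinates: functions on lists of basis indices, supported on length n\<close>

fun itcomul :: "('k::field,'i::finite) hopf_data \<Rightarrow> nat \<Rightarrow> ('i \<Rightarrow> 'k) \<Rightarrow> ('i list \<Rightarrow> 'k)" where
  "itcomul A 0 h = (\<lambda>xs. if xs = [] then hcounit A h else 0)"
| "itcomul A (Suc n) h = (\<lambda>xs. case xs of [] \<Rightarrow> 0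
       | x # ys \<Rightarrow> (\<Sum>c\<in>UNIV. hcomul A h (x,c) * itcomul A n (basis_vec c) ys))"

text \<open>diagonal right action: (x_1 \<otimes> ... \<otimes> x_n) h = x_1 h_(1) \<otimes> ... \<otimes> x_n h_(n)\<close>
definition tact :: "('k::field,'i::finite) hopf_data \<Rightarrow> nat \<Rightarrow> ('i list \<Rightarrow> 'k) \<Rightarrow> ('i \<Rightarrow> 'k) \<Rightarrow> ('i list \<Rightarrow> 'k)" where
  "tact A n t h = (\<lambda>ys. if length ys = n then
      (\<Sum>xs\<in>{xs. length xs = n}. \<Sum>zs\<in>{zs. length zs = n}.
          t xs * itcomul A n h zs * (\<Prod>j<n. smul A (xs ! j) (zs ! j) (ys ! j)))
      else 0)"

definition Htens :: "('k::field,'i::finite) hopf_data \<Rightarrow> nat \<Rightarrow> ('i \<Rightarrow> 'k, 'i list \<Rightarrow> 'k) rmod" where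
  "Htens A n = \<lparr> mcar = {t. \<forall>xs. length xs \<noteq> n \<longrightarrow> t xs = 0},
                 madd = (\<lambda>s t xs. s xs + t xs),
                 mzero = (\<lambda>xs. 0),
                 mact = tact A n \<rparr>"

definition ptens :: "('i \<Rightarrow> 'k::field) list \<Rightarrow> ('i list \<Rightarrow> 'k)" where
  "ptens vs = (\<lambda>xs. if length xs = length vs then (\<Prod>j<length vs. (vs ! j) (xs ! j)) else 0)"

text \<open>kernel of H^{\<otimes>n} \<rightarrow> Q^{\<otimes>n}: \<Sum>_i H \<otimes> ... \<otimes> R^+H \<otimes> ... \<otimes> H\<close>
definition Kn :: "('k::field,'i::finite) hopf_data \<Rightarrow> ('i \<Rightarrow> 'k) set \<Rightarrow> nat \<Rightarrow> ('i list \<Rightarrow> 'k) set" where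
  "Kn A R n = {t. \<exists>(m::nat) F. (\<forall>j<m. length (F j) = n \<and> (\<exists>i<n. F j ! i \<in> RplusH A R)) \<and>
                   t = (\<lambda>xs. \<Sum>j<m. ptens (F j) xs)}"

definition Qtens :: "('k::field,'i::finite) hopf_data \<Rightarrow> ('i \<Rightarrow> 'k) set \<Rightarrow> nat \<Rightarrow> ('i \<Rightarrow> 'k, ('i list \<Rightarrow> 'k) set) rmod" where
  "Qtens A R n = quot (Htens A n) (Kn A R n)"

definition ellQ :: "('k::field,'i::finite) hopf_data \<Rightarrow> ('i \<Rightarrow> 'k) set \<Rightarrow> nat" where
  "ellQ A R = (LEAST n. 1 \<le> n \<and> (\<forall>m\<ge>n. annih UNIV (Qtens A R n) = annih UNIV (Qtens A R m)))"

end

theory Submission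
  imports Defs "HOL-Library.Function_Algebras" "HOL.Vector_Spaces"
begin

text \<open>Let \<open>K\<^sub>n\<close> be the kernel of \<open>H\<^sup>\<otimes>\<^sup>n \<rightarrow> Q\<^sup>\<otimes>\<^sup>n\<close>. The map \<open>\<epsilon> \<otimes> id : H\<^sup>\<otimes>\<^sup>n\<^sup>+\<^sup>1 \<rightarrow> H\<^sup>\<otimes>\<^sup>n\<close> sends
  \<open>K\<^sub>n\<^sub>+\<^sub>1\<close> into \<open>K\<^sub>n\<close> (as \<open>\<epsilon>\<close> vanishes on \<open>R\<^sup>+H\<close>) and satisfies \<open>(\<epsilon> \<otimes> id)((1 \<otimes> t) h) = t h\<close>; hence
  \<open>Ann Q\<^sup>\<otimes>\<^sup>n\<^sup>+\<^sup>1 \<subseteq> Ann Q\<^sup>\<otimes>\<^sup>n\<close>, and this decreasing chain of subspaces of the finite-dimensional \<open>H\<close>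
  is constant from \<open>l\<^sub>Q\<close> on. It remains to see that \<open>\<sigma>[M] \<subseteq> \<sigma>[N]\<close> whenever \<open>Ann N \<subseteq> Ann M\<close>, \<open>M\<close> is
  finitely generated and \<open>N\<close> finite-dimensional: if \<open>v\<^sub>1, \<dots>, v\<^sub>d\<close> span \<open>N\<close>, then
  \<open>h \<mapsto> (v\<^sub>i h)\<^sub>i\<close> embeds \<open>H/Ann N\<close> into \<open>N\<^sup>d\<close>, and \<open>M\<^sup>m\<close>, a quotient of \<open>(H/Ann M)\<^sup>m\<^sup>r\<close>, is therefore a
  subquotient of \<open>N\<^sup>m\<^sup>r\<^sup>d\<close>.\<close>

lemma sum_if_outer: "(\<Sum>x\<in>S. if P then f x else 0) = (if P then (\<Sum>x\<in>S. f x) else (0::'a::comm_monoid_add))"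
  by simp

lemmas basis_vec_simps = basis_vec_def if_distrib[of "\<lambda>x. x * _"] if_distrib[of "\<lambda>x. _ * x"] sum_if_outer

lemma sum_mult_basis_vec [simp]: "(\<Sum>b\<in>(UNIV::'i::finite set). f b * basis_vec c b) = (f c :: 'k::field)"
  by (simp add: basis_vec_simps cong: if_cong)

lemma sum_basis_vec_mult [simp]: "(\<Sum>b\<in>(UNIV::'i::finite set). basis_vec c b * f b) = (f c :: 'k::field)"
  by (simp add: basis_vec_simps cong: if_cong)

lemma hmult_basis_vec: "hmult A (basis_vec a) (basis_vec b) = (\<lambda>c. smul A a b c)"
  unfolding hmult_def by (simp add: basis_vec_simps cong: if_cong)

lemma hcomul_basis_vec: "hcomul A (basis_vec a) (p,q) = scomul A a p q"
  unfolding hcomul_def by (simp add: basis_vec_simps cong: if_cong)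

lemma hcounit_basis_vec: "hcounit A (basis_vec a) = scounit A a"
  unfolding hcounit_def by (simp add: basis_vec_simps cong: if_cong)

lemma
  assumes "hopf_algebra A"
  shows hopf_hmult_assoc: "hmult A (hmult A x y) z = hmult A x (hmult A y z)"
    and hopf_hmult_hone_left: "hmult A (hone A) x = x"
    and hopf_hmult_hone_right: "hmult A x (hone A) = x"
    and hopf_counit_left: "(\<lambda>q. \<Sum>p\<in>UNIV. hcomul A x (p,q) * scounit A p) = x"
    and hopf_hcomul_hmult: "hcomul A (hmult A x y) = tmult A (hcomul A x) (hcomul A y)"
    and hopf_hcomul_hone: "hcomul A (hone A) = tens (hone A) (hone A)"
    and hopf_hcounit_hmult: "hcounit A (hmult A x y) = hcounit A x * hcounit A y"
    and hopf_hcounit_hone: "hcounit A (hone A) = 1"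
  using assms unfolding hopf_algebra_def by blast+

context
  fixes A :: "('k::field, 'i::finite) hopf_data"
  assumes H: "hopf_algebra A"
begin

lemma smul_assoc: "(\<Sum>w\<in>UNIV. smul A a b w * smul A w c y) = (\<Sum>z\<in>UNIV. smul A b c z * smul A a z y)"
proof -
  have "hmult A (hmult A (basis_vec a) (basis_vec b)) (basis_vec c) y =
        hmult A (basis_vec a) (hmult A (basis_vec b) (basis_vec c)) y"
    by (simp add: hopf_hmult_assoc[OF H])
  thus ?thesis unfolding hmult_basis_vec unfolding hmult_def
    by (simp add: basis_vec_simps cong: if_cong)
qed

lemma smul_sunit_right: "(\<Sum>z\<in>UNIV. sunit A z * smul A a z y) = (if a = y then 1 else 0)"
proof -
  have "hmult A (basis_vec a) (hone A) y = basis_vec a y"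
    by (simp add: hopf_hmult_hone_right[OF H])
  thus ?thesis unfolding hmult_def hone_def by (simp add: basis_vec_simps mult.commute cong: if_cong)
qed

lemma smul_scounit: "(\<Sum>c\<in>UNIV. smul A a b c * scounit A c) = scounit A a * scounit A b"
  using hopf_hcounit_hmult[OF H, of "basis_vec a" "basis_vec b"]
  unfolding hmult_basis_vec hcounit_basis_vec by (simp add: hcounit_def)

lemma sunit_scounit: "(\<Sum>a\<in>UNIV. sunit A a * scounit A a) = 1"
  using hopf_hcounit_hone[OF H] unfolding hcounit_def hone_def .

lemma sunit_scomul: "(\<Sum>a\<in>UNIV. sunit A a * scomul A a b c) = sunit A b * sunit A c"
  using fun_cong[OF hopf_hcomul_hone[OF H], of "(b,c)"] unfolding hcomul_def hone_def tens_def by simp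

end

lemma hmult_sum_left: "hmult A (\<lambda>c. \<Sum>j\<in>S. x j c) y = (\<lambda>c. \<Sum>j\<in>S. hmult A (x j) y c)"
  unfolding hmult_def by (simp add: sum_distrib_right fun_eq_iff sum.swap[of _ S])

lemma hmult_smult_left: "hmult A (\<lambda>a. c * x a) y = (\<lambda>b. c * hmult A x y b)"
  unfolding hmult_def by (simp add: sum_distrib_left fun_eq_iff mult_ac)

lemma hmult_smult_right: "hmult A x (\<lambda>a. c * y a) = (\<lambda>b. c * hmult A x y b)"
  unfolding hmult_def by (simp add: sum_distrib_left fun_eq_iff mult_ac)

lemma hcounit_sum: "hcounit A (\<lambda>c. \<Sum>j\<in>S. y j c) = (\<Sum>j\<in>S. hcounit A (y j))"
  unfolding hcounit_def by (simp add: sum_distrib_right sum.swap[of _ S])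

text \<open>A right \<open>H\<close>-module carries no scalar multiplication of its own: scalars act through
  \<open>c \<mapsto> c \<cdot> 1\<close>.\<close>

definition hscal :: "('k::field,'i::finite) hopf_data \<Rightarrow> 'k \<Rightarrow> ('i \<Rightarrow> 'k)" where
  "hscal A c = (\<lambda>a. c * hone A a)"

lemma hmult_hscal_left: "hopf_algebra A \<Longrightarrow> hmult A (hscal A c) h = (\<lambda>a. c * h a)"
  unfolding hscal_def hmult_smult_left by (simp add: hopf_hmult_hone_left)

lemma hmult_hscal_right: "hopf_algebra A \<Longrightarrow> hmult A h (hscal A c) = (\<lambda>a. c * h a)"
  unfolding hscal_def hmult_smult_right by (simp add: hopf_hmult_hone_right)

lemma lists_length_Suc_eq: "{xs::'a list. length xs = Suc n} = (\<lambda>(x,xs). x#xs) ` (UNIV \<times> {xs. length xs = n})"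
proof (rule set_eqI, rule iffI)
  fix xs :: "'a list" assume "xs \<in> {xs. length xs = Suc n}"
  then obtain y ys where "xs = y # ys" "length ys = n" by (auto simp: length_Suc_conv)
  thus "xs \<in> (\<lambda>(x,xs). x#xs) ` (UNIV \<times> {xs. length xs = n})" by force
qed auto

lemma finite_lists_length [simp]: "finite {xs::'a::finite list. length xs = n}"
  by (induction n) (auto simp: lists_length_Suc_eq)

lemma sum_lists_length_Suc: "(\<Sum>xs\<in>{xs::'a list. length xs = Suc n}. f xs) = (\<Sum>x\<in>UNIV. \<Sum>xs\<in>{xs. length xs = n}. f (x#xs))"
proof -
  have inj: "inj_on (\<lambda>(x,xs). x#xs) (UNIV \<times> {xs::'a list. length xs = n})"
    by (auto simp: inj_on_def)
  show ?thesis
    unfolding lists_length_Suc_eq sum.reindex[OF inj] sum.cartesian_product by (simp add: case_prod_beta')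
qed

lemma sum_lists_length_prod: "(\<Sum>zs\<in>{zs::'a::finite list. length zs = n}. \<Prod>j<n. g j (zs!j)) = (\<Prod>j<n. \<Sum>z\<in>UNIV. (g j z :: 'k::comm_semiring_1))"
proof (induction n arbitrary: g)
  case 0 thus ?case by simp
next
  case (Suc n)
  have "(\<Sum>zs\<in>{zs::'a list. length zs = Suc n}. \<Prod>j<Suc n. g j (zs!j))
      = (\<Sum>z\<in>UNIV. \<Sum>zs\<in>{zs::'a list. length zs = n}. g 0 z * (\<Prod>j<n. g (Suc j) (zs!j)))"
    unfolding sum_lists_length_Suc prod.lessThan_Suc_shift by simp
  also have "\<dots> = (\<Sum>z\<in>UNIV. g 0 z * (\<Sum>zs\<in>{zs::'a list. length zs = n}. (\<Prod>j<n. g (Suc j) (zs!j))))"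
    by (simp add: sum_distrib_left)
  also have "\<dots> = (\<Sum>z\<in>UNIV. g 0 z) * (\<Prod>j<n. \<Sum>z\<in>UNIV. g (Suc j) z)"
    using Suc[of "\<lambda>j. g (Suc j)"] by (simp add: sum_distrib_right)
  also have "\<dots> = (\<Prod>j<Suc n. \<Sum>z\<in>UNIV. g j z)"
    unfolding prod.lessThan_Suc_shift by simp
  finally show ?case .
qed

lemma prod_nth_eq_indicator:
  assumes "length xs = n" "length ys = n"
  shows "(\<Prod>j<n. (if xs!j = ys!j then 1 else (0::'k::comm_semiring_1))) = (if xs = ys then 1 else 0)"
proof (cases "xs = ys")
  case True thus ?thesis by simp
next
  case False
  then obtain j where "j < n" "xs!j \<noteq> ys!j" using assms nth_equalityI by metis
  hence "(\<Prod>j<n. (if xs!j = ys!j then 1 else (0::'k))) = 0" by (intro prod_zero) auto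
  thus ?thesis using False by simp
qed

lemma sum_lists_length_indicator:
  assumes "length ys = n"
  shows "(\<Sum>xs\<in>{xs::'a::finite list. length xs = n}. f xs * (\<Prod>j<n. (if xs!j = ys!j then 1 else (0::'k::comm_semiring_1)))) = f ys"
proof -
  have "(\<Sum>xs\<in>{xs::'a list. length xs = n}. f xs * (\<Prod>j<n. (if xs!j = ys!j then 1 else (0::'k))))
      = (\<Sum>xs\<in>{xs::'a list. length xs = n}. if xs = ys then f xs else 0)"
    using assms by (intro sum.cong) (auto simp: prod_nth_eq_indicator)
  thus ?thesis using assms by simp
qed

section \<open>The algebra and the right module \<open>H\<^sup>\<otimes>\<^sup>n\<close>\<close>

lemma sum_swap_innermost_out: "(\<Sum>x\<in>X. \<Sum>z\<in>Z. \<Sum>a\<in>C. F x z a) = (\<Sum>a\<in>C. \<Sum>x\<in>X. \<Sum>z\<in>Z. (F x z a :: 'a::comm_monoid_add))"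
proof -
  have "(\<Sum>x\<in>X. \<Sum>z\<in>Z. \<Sum>a\<in>C. F x z a) = (\<Sum>x\<in>X. \<Sum>a\<in>C. \<Sum>z\<in>Z. F x z a)"
    by (rule sum.cong[OF refl], rule sum.swap)
  also have "\<dots> = (\<Sum>a\<in>C. \<Sum>x\<in>X. \<Sum>z\<in>Z. F x z a)" by (rule sum.swap)
  finally show ?thesis .
qed

lemma sum_reorder4:
  "(\<Sum>a\<in>A. \<Sum>b\<in>B. \<Sum>c\<in>C. \<Sum>d\<in>D. f a b c d) = (\<Sum>c\<in>C. \<Sum>d\<in>D. \<Sum>b\<in>B. \<Sum>a\<in>A. (f a b c d :: 'a::comm_monoid_add))"
proof -
  have "(\<Sum>a\<in>A. \<Sum>b\<in>B. \<Sum>c\<in>C. \<Sum>d\<in>D. f a b c d) = (\<Sum>b\<in>B. \<Sum>c\<in>C. \<Sum>d\<in>D. \<Sum>a\<in>A. f a b c d)"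
    by (simp only: sum.swap[of _ A])
  also have "\<dots> = (\<Sum>c\<in>C. \<Sum>d\<in>D. \<Sum>b\<in>B. \<Sum>a\<in>A. f a b c d)"
    by (simp only: sum.swap[of _ B])
  finally show ?thesis .
qed

lemma sum_swap_outermost_in: "(\<Sum>c\<in>C. \<Sum>a1\<in>A1. \<Sum>a2\<in>A2. \<Sum>b1\<in>B1. \<Sum>b2\<in>B2. F c a1 a2 b1 b2) = (\<Sum>a1\<in>A1. \<Sum>a2\<in>A2. \<Sum>b1\<in>B1. \<Sum>b2\<in>B2. \<Sum>c\<in>C. (F c a1 a2 b1 b2::'a::comm_monoid_add))"
  by (simp only: sum.swap[of _ C])

text \<open>The product \<open>(x\<^sub>1 \<otimes> \<dots> \<otimes> x\<^sub>n)(y\<^sub>1 \<otimes> \<dots> \<otimes> y\<^sub>n) = x\<^sub>1y\<^sub>1 \<otimes> \<dots> \<otimes> x\<^sub>ny\<^sub>n\<close> of the algebra \<open>H\<^sup>\<otimes>\<^sup>n\<close>, in coordinates.\<close>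

definition tpow_mult :: "('k::field,'i::finite) hopf_data \<Rightarrow> nat \<Rightarrow> ('i list \<Rightarrow> 'k) \<Rightarrow> ('i list \<Rightarrow> 'k) \<Rightarrow> ('i list \<Rightarrow> 'k)" where
 "tpow_mult A n t s = (\<lambda>ys. \<Sum>xs\<in>{xs. length xs = n}. \<Sum>zs\<in>{zs. length zs = n}. t xs * s zs * (\<Prod>j<n. smul A (xs!j) (zs!j) (ys!j)))"

lemma tpow_mult_Nil [simp]: "tpow_mult A 0 t s [] = t [] * s []"
  by (simp add: tpow_mult_def)

lemma tpow_mult_Suc: "tpow_mult A (Suc n) t s (y#ys) = (\<Sum>a\<in>UNIV. \<Sum>b\<in>UNIV. smul A a b y * tpow_mult A n (\<lambda>xs. t (a#xs)) (\<lambda>zs. s (b#zs)) ys)"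
proof -
  have "tpow_mult A (Suc n) t s (y#ys) = (\<Sum>a\<in>UNIV. \<Sum>xs\<in>{xs. length xs = n}. \<Sum>b\<in>UNIV. \<Sum>zs\<in>{zs. length zs = n}.
     smul A a b y * (t (a#xs) * s (b#zs) * (\<Prod>j<n. smul A (xs!j) (zs!j) (ys!j))))"
    unfolding tpow_mult_def sum_lists_length_Suc prod.lessThan_Suc_shift by (simp add: mult_ac)
  also have "\<dots> = (\<Sum>a\<in>UNIV. \<Sum>b\<in>UNIV. \<Sum>xs\<in>{xs. length xs = n}. \<Sum>zs\<in>{zs. length zs = n}.
     smul A a b y * (t (a#xs) * s (b#zs) * (\<Prod>j<n. smul A (xs!j) (zs!j) (ys!j))))"
    by (rule sum.cong[OF refl], rule sum.swap)
  also have "\<dots> = (\<Sum>a\<in>UNIV. \<Sum>b\<in>UNIV. smul A a b y * tpow_mult A n (\<lambda>xs. t (a#xs)) (\<lambda>zs. s (b#zs)) ys)"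
    unfolding tpow_mult_def by (simp add: sum_distrib_left)
  finally show ?thesis .
qed

lemma tpow_mult_cong: "(\<And>xs. length xs = n \<Longrightarrow> t xs = t' xs) \<Longrightarrow> (\<And>xs. length xs = n \<Longrightarrow> s xs = s' xs) \<Longrightarrow> tpow_mult A n t s ys = tpow_mult A n t' s' ys"
  unfolding tpow_mult_def by (intro sum.cong) auto

lemma tpow_mult_sum_left: "tpow_mult A n (\<lambda>xs. \<Sum>j\<in>S. f j xs) s ys = (\<Sum>j\<in>S. tpow_mult A n (f j) s ys)"
proof -
  have "tpow_mult A n (\<lambda>xs. \<Sum>j\<in>S. f j xs) s ys =
     (\<Sum>xs\<in>{xs. length xs = n}. \<Sum>zs\<in>{zs. length zs = n}. \<Sum>j\<in>S. f j xs * s zs * (\<Prod>i<n. smul A (xs!i) (zs!i) (ys!i)))"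
    unfolding tpow_mult_def by (simp add: sum_distrib_right)
  also have "\<dots> = (\<Sum>j\<in>S. tpow_mult A n (f j) s ys)"
    unfolding tpow_mult_def by (rule sum_swap_innermost_out)
  finally show ?thesis .
qed

lemma tpow_mult_sum_right: "tpow_mult A n t (\<lambda>zs. \<Sum>j\<in>S. f j zs) ys = (\<Sum>j\<in>S. tpow_mult A n t (f j) ys)"
proof -
  have "tpow_mult A n t (\<lambda>zs. \<Sum>j\<in>S. f j zs) ys =
     (\<Sum>xs\<in>{xs. length xs = n}. \<Sum>zs\<in>{zs. length zs = n}. \<Sum>j\<in>S. t xs * f j zs * (\<Prod>i<n. smul A (xs!i) (zs!i) (ys!i)))"
    unfolding tpow_mult_def by (simp add: sum_distrib_left sum_distrib_right)
  also have "\<dots> = (\<Sum>j\<in>S. tpow_mult A n t (f j) ys)"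
    unfolding tpow_mult_def by (rule sum_swap_innermost_out)
  finally show ?thesis .
qed

lemma tpow_mult_smult_left: "tpow_mult A n (\<lambda>xs. c * t xs) s ys = c * tpow_mult A n t s ys"
  unfolding tpow_mult_def by (simp add: sum_distrib_left mult_ac)

lemma tpow_mult_smult_right: "tpow_mult A n t (\<lambda>xs. c * s xs) ys = c * tpow_mult A n t s ys"
  unfolding tpow_mult_def by (simp add: sum_distrib_left mult_ac)

lemma tpow_mult_lin_left: "tpow_mult A n (\<lambda>xs. \<Sum>a\<in>UNIV. c a * t a xs) s ys = (\<Sum>a\<in>UNIV. c a * tpow_mult A n (t a) s ys)"
  by (simp add: tpow_mult_sum_left tpow_mult_smult_left)

lemma tpow_mult_lin_right: "tpow_mult A n t (\<lambda>zs. \<Sum>a\<in>UNIV. c a * s a zs) ys = (\<Sum>a\<in>UNIV. c a * tpow_mult A n t (s a) ys)"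
  by (simp add: tpow_mult_sum_right tpow_mult_smult_right)

lemma tpow_mult_add_left: "tpow_mult A n (\<lambda>xs. t xs + t' xs) s ys = tpow_mult A n t s ys + tpow_mult A n t' s ys"
  unfolding tpow_mult_def by (simp add: distrib_right sum.distrib)

lemma tpow_mult_add_right: "tpow_mult A n t (\<lambda>xs. s xs + s' xs) ys = tpow_mult A n t s ys + tpow_mult A n t s' ys"
  unfolding tpow_mult_def by (simp add: distrib_right distrib_left sum.distrib)

lemma tact_tpow_mult: "tact A n t h = (\<lambda>ys. if length ys = n then tpow_mult A n t (itcomul A n h) ys else 0)"
  by (simp add: tact_def tpow_mult_def fun_eq_iff)

lemma itcomul_basis_expansion: "itcomul A n h zs = (\<Sum>a\<in>UNIV. h a * itcomul A n (basis_vec a) zs)"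
proof (cases n)
  case 0 thus ?thesis by (simp add: hcounit_basis_vec hcounit_def sum_distrib_right)
next
  case (Suc m)
  show ?thesis
  proof (cases zs)
    case Nil thus ?thesis using Suc by simp
  next
    case (Cons x ys)
    have "itcomul A n h zs = (\<Sum>c\<in>UNIV. \<Sum>a\<in>UNIV. h a * (scomul A a x c * itcomul A m (basis_vec c) ys))"
      using Suc Cons by (simp add: hcomul_def sum_distrib_left sum_distrib_right mult_ac)
    also have "\<dots> = (\<Sum>a\<in>UNIV. \<Sum>c\<in>UNIV. h a * (scomul A a x c * itcomul A m (basis_vec c) ys))"
      by (rule sum.swap)
    also have "\<dots> = (\<Sum>a\<in>UNIV. h a * itcomul A n (basis_vec a) zs)"
      using Suc Cons by (simp add: hcomul_basis_vec sum_distrib_left)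
    finally show ?thesis .
  qed
qed

lemma itcomul_add: "itcomul A n (\<lambda>a. h a + h' a) zs = itcomul A n h zs + itcomul A n h' zs"
  by (subst (1 2 3) itcomul_basis_expansion) (simp add: distrib_right sum.distrib)

lemma itcomul_smult: "itcomul A n (\<lambda>a. c * h a) zs = c * itcomul A n h zs"
  by (subst (1 2) itcomul_basis_expansion) (simp add: sum_distrib_left mult_ac)

lemma itcomul_hscal: "itcomul A n (hscal A c) zs = c * itcomul A n (hone A) zs"
  unfolding hscal_def by (rule itcomul_smult)

context
  fixes A :: "('k::field, 'i::finite) hopf_data"
  assumes H: "hopf_algebra A"
begin

lemma itcomul_hone: "itcomul A n (hone A) zs = (if length zs = n then \<Prod>j<n. sunit A (zs!j) else 0)"
proof (induction n arbitrary: zs)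
  case 0 thus ?case using sunit_scounit[OF H] by (simp add: hcounit_def hone_def mult.commute)
next
  case (Suc n)
  show ?case
  proof (cases zs)
    case Nil thus ?thesis by simp
  next
    case (Cons x ys)
    have "itcomul A (Suc n) (hone A) zs = (\<Sum>c\<in>UNIV. sunit A x * (sunit A c * itcomul A n (basis_vec c) ys))"
      using Cons sunit_scomul[OF H] by (simp add: hcomul_def hone_def mult.commute mult.left_commute)
    also have "\<dots> = sunit A x * itcomul A n (hone A) ys"
      by (simp add: hone_def sum_distrib_left[symmetric] itcomul_basis_expansion[of A n "sunit A" ys, symmetric])
    finally show ?thesis using Cons Suc by (simp add: prod.lessThan_Suc_shift del: prod.lessThan_Suc)
  qed
qed

lemma itcomul_hmult: "length zs = n \<Longrightarrow> itcomul A n (hmult A h h') zs = tpow_mult A n (itcomul A n h) (itcomul A n h') zs"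
proof (induction n arbitrary: h h' zs)
  case 0 thus ?case using hopf_hcounit_hmult[OF H] by simp
next
  case (Suc n)
  then obtain z ys where zs: "zs = z # ys" and len: "length ys = n" by (auto simp: length_Suc_conv)
  let ?D = "hcomul A h" and ?D' = "hcomul A h'"
  have "itcomul A (Suc n) (hmult A h h') zs = (\<Sum>c\<in>UNIV. tmult A ?D ?D' (z,c) * itcomul A n (basis_vec c) ys)"
    using zs hopf_hcomul_hmult[OF H] by simp
  also have "\<dots> = (\<Sum>c\<in>UNIV. \<Sum>a1\<in>UNIV. \<Sum>a2\<in>UNIV. \<Sum>b1\<in>UNIV. \<Sum>b2\<in>UNIV.
        (?D (a1,a2) * ?D' (b1,b2) * smul A a1 b1 z) * (smul A a2 b2 c * itcomul A n (basis_vec c) ys))"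
    unfolding tmult_def by (simp only: sum_distrib_right case_prod_conv) (simp only: mult.assoc)
  also have "\<dots> = (\<Sum>a1\<in>UNIV. \<Sum>a2\<in>UNIV. \<Sum>b1\<in>UNIV. \<Sum>b2\<in>UNIV.
        (?D (a1,a2) * ?D' (b1,b2) * smul A a1 b1 z) * (\<Sum>c\<in>UNIV. smul A a2 b2 c * itcomul A n (basis_vec c) ys))"
    by (subst sum_swap_outermost_in) (simp add: sum_distrib_left)
  also have "\<dots> = (\<Sum>a1\<in>UNIV. \<Sum>a2\<in>UNIV. \<Sum>b1\<in>UNIV. \<Sum>b2\<in>UNIV.
        (?D (a1,a2) * ?D' (b1,b2) * smul A a1 b1 z) * tpow_mult A n (itcomul A n (basis_vec a2)) (itcomul A n (basis_vec b2)) ys)"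
  proof -
    have "(\<Sum>c\<in>UNIV. smul A a2 b2 c * itcomul A n (basis_vec c) ys) = tpow_mult A n (itcomul A n (basis_vec a2)) (itcomul A n (basis_vec b2)) ys" for a2 b2
      using itcomul_basis_expansion[of A n "hmult A (basis_vec a2) (basis_vec b2)" ys] Suc.IH[OF len, of "basis_vec a2" "basis_vec b2"]
      by (simp add: hmult_basis_vec)
    thus ?thesis by simp
  qed
  also have "\<dots> = (\<Sum>a1\<in>UNIV. \<Sum>b1\<in>UNIV. \<Sum>a2\<in>UNIV. \<Sum>b2\<in>UNIV.
        smul A a1 b1 z * (?D (a1,a2) * (?D' (b1,b2) * tpow_mult A n (itcomul A n (basis_vec a2)) (itcomul A n (basis_vec b2)) ys)))"
    by (rule sum.cong[OF refl], subst sum.swap, simp add: mult_ac)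
  also have "\<dots> = (\<Sum>a1\<in>UNIV. \<Sum>b1\<in>UNIV. smul A a1 b1 z *
        tpow_mult A n (\<lambda>as. itcomul A (Suc n) h (a1#as)) (\<lambda>bs. itcomul A (Suc n) h' (b1#bs)) ys)"
    by (simp add: tpow_mult_lin_left tpow_mult_lin_right sum_distrib_left)
  also have "\<dots> = tpow_mult A (Suc n) (itcomul A (Suc n) h) (itcomul A (Suc n) h') zs"
    unfolding zs tpow_mult_Suc ..
  finally show ?case .
qed

lemma tpow_mult_assoc: "tpow_mult A n (tpow_mult A n t u) v ys = tpow_mult A n t (tpow_mult A n u v) ys"
proof -
  let ?L = "{xs::'i list. length xs = n}"
  have "tpow_mult A n (tpow_mult A n t u) v ys =
     (\<Sum>ws\<in>?L. \<Sum>bs\<in>?L. \<Sum>xs\<in>?L. \<Sum>as\<in>?L. (t xs * u as * v bs) *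
        ((\<Prod>j<n. smul A (xs!j) (as!j) (ws!j)) * (\<Prod>j<n. smul A (ws!j) (bs!j) (ys!j))))"
    unfolding tpow_mult_def by (simp add: sum_distrib_left sum_distrib_right mult_ac)
  also have "\<dots> = (\<Sum>xs\<in>?L. \<Sum>as\<in>?L. \<Sum>bs\<in>?L. \<Sum>ws\<in>?L. (t xs * u as * v bs) *
        ((\<Prod>j<n. smul A (xs!j) (as!j) (ws!j)) * (\<Prod>j<n. smul A (ws!j) (bs!j) (ys!j))))"
    by (rule sum_reorder4)
  also have "\<dots> = (\<Sum>xs\<in>?L. \<Sum>as\<in>?L. \<Sum>bs\<in>?L. (t xs * u as * v bs) *
        (\<Prod>j<n. \<Sum>w\<in>UNIV. smul A (xs!j) (as!j) w * smul A w (bs!j) (ys!j)))"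
    by (simp add: sum_distrib_left[symmetric] prod.distrib[symmetric] sum_lists_length_prod[where g = "\<lambda>j w. smul A (xs!j) (as!j) w * smul A w (bs!j) (ys!j)" for xs as bs])
  also have "\<dots> = (\<Sum>xs\<in>?L. \<Sum>as\<in>?L. \<Sum>bs\<in>?L. (t xs * u as * v bs) *
        (\<Prod>j<n. \<Sum>z\<in>UNIV. smul A (as!j) (bs!j) z * smul A (xs!j) z (ys!j)))"
    by (simp add: smul_assoc[OF H])
  also have "\<dots> = (\<Sum>xs\<in>?L. \<Sum>as\<in>?L. \<Sum>bs\<in>?L. \<Sum>zs\<in>?L. (t xs * u as * v bs) *
        ((\<Prod>j<n. smul A (as!j) (bs!j) (zs!j)) * (\<Prod>j<n. smul A (xs!j) (zs!j) (ys!j))))"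
    by (simp add: sum_distrib_left[symmetric] prod.distrib[symmetric] sum_lists_length_prod[where g = "\<lambda>j z. smul A (as!j) (bs!j) z * smul A (xs!j) z (ys!j)" for xs as bs])
  also have "\<dots> = (\<Sum>xs\<in>?L. \<Sum>zs\<in>?L. \<Sum>as\<in>?L. \<Sum>bs\<in>?L. (t xs * u as * v bs) *
        ((\<Prod>j<n. smul A (as!j) (bs!j) (zs!j)) * (\<Prod>j<n. smul A (xs!j) (zs!j) (ys!j))))"
    by (rule sum.cong[OF refl], rule sum_swap_innermost_out)
  also have "\<dots> = tpow_mult A n t (tpow_mult A n u v) ys"
    unfolding tpow_mult_def by (simp add: sum_distrib_left sum_distrib_right mult_ac)
  finally show ?thesis .
qed

lemma tpow_mult_unit:
  assumes "length ys = n"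
  shows "tpow_mult A n t (itcomul A n (hone A)) ys = t ys"
proof -
  let ?L = "{xs::'i list. length xs = n}"
  have "tpow_mult A n t (itcomul A n (hone A)) ys =
    (\<Sum>xs\<in>?L. t xs * (\<Sum>zs\<in>?L. \<Prod>j<n. sunit A (zs!j) * smul A (xs!j) (zs!j) (ys!j)))"
    unfolding tpow_mult_def itcomul_hone by (simp add: sum_distrib_left prod.distrib mult_ac)
  also have "\<dots> = (\<Sum>xs\<in>?L. t xs * (\<Prod>j<n. (if xs!j = ys!j then 1 else 0)))"
    by (simp add: sum_lists_length_prod[where g = "\<lambda>j z. sunit A z * smul A (xs!j) z (ys!j)" for xs] smul_sunit_right[OF H])
  also have "\<dots> = t ys" using sum_lists_length_indicator[OF assms] .
  finally show ?thesis .
qed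

lemma itcomul_add_fun: "itcomul A n (\<lambda>a. h a + h' a) = (\<lambda>zs. itcomul A n h zs + itcomul A n h' zs)"
  by (simp add: fun_eq_iff itcomul_add)

lemma tact_hmult: "tact A n u (hmult A h h') = tact A n (tact A n u h) h'"
proof (rule ext)
  fix ys :: "'i list"
  show "tact A n u (hmult A h h') ys = tact A n (tact A n u h) h' ys"
  proof (cases "length ys = n")
    case True
    have "tpow_mult A n u (itcomul A n (hmult A h h')) ys
        = tpow_mult A n u (tpow_mult A n (itcomul A n h) (itcomul A n h')) ys"
      by (rule tpow_mult_cong) (auto simp: itcomul_hmult)
    also have "\<dots> = tpow_mult A n (tpow_mult A n u (itcomul A n h)) (itcomul A n h') ys"
      by (rule tpow_mult_assoc[symmetric])
    also have "\<dots> = tpow_mult A n (tact A n u h) (itcomul A n h') ys"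
      by (rule tpow_mult_cong) (auto simp: tact_tpow_mult)
    finally show ?thesis using True by (simp add: tact_tpow_mult)
  qed (simp add: tact_def)
qed

lemma tact_hone: "\<forall>xs. length xs \<noteq> n \<longrightarrow> u xs = 0 \<Longrightarrow> tact A n u (hone A) = u"
  by (auto simp: fun_eq_iff tact_tpow_mult tpow_mult_unit)

lemma Htens_rmodule: "rmodule A (Htens A n)"
proof -
  have "\<forall>xs. length xs \<noteq> n \<longrightarrow> tact A n u h xs = 0" for u h
    by (simp add: tact_def)
  moreover have "tact A n (\<lambda>xs. s xs + t xs) h = (\<lambda>xs. tact A n s h xs + tact A n t h xs)" for s t h
    by (simp add: tact_tpow_mult tpow_mult_add_left fun_eq_iff)
  moreover have "tact A n u (\<lambda>a. h a + h' a) = (\<lambda>xs. tact A n u h xs + tact A n u h' xs)" for u h h'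
    by (simp add: tact_tpow_mult itcomul_add_fun tpow_mult_add_right fun_eq_iff)
  moreover have "\<exists>w. (\<forall>xs. length xs \<noteq> n \<longrightarrow> w xs = 0) \<and> (\<lambda>xs. u xs + w xs) = (\<lambda>xs. 0)"
    if "\<forall>xs. length xs \<noteq> n \<longrightarrow> u xs = 0" for u :: "'i list \<Rightarrow> 'k"
    using that by (intro exI[of _ "\<lambda>xs. - u xs"]) simp
  ultimately show ?thesis
    unfolding rmodule_def Htens_def
    by (simp add: tact_hmult tact_hone fun_eq_iff ac_simps)
qed

end

lemma tact_hscal:
  assumes H: "hopf_algebra A" and t: "\<forall>xs. length xs \<noteq> n \<longrightarrow> t xs = 0"
  shows "tact A n t (hscal A c) = (\<lambda>ys. c * t ys)"
proof (rule ext)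
  fix ys
  show "tact A n t (hscal A c) ys = c * t ys"
  proof (cases "length ys = n")
    case True
    have "tpow_mult A n t (itcomul A n (hscal A c)) ys = tpow_mult A n t (\<lambda>zs. c * itcomul A n (hone A) zs) ys"
      by (rule tpow_mult_cong) (simp_all add: itcomul_hscal)
    also have "\<dots> = c * t ys" by (simp add: tpow_mult_smult_right tpow_mult_unit[OF H True])
    finally show ?thesis using True by (simp add: tact_tpow_mult)
  qed (use t in \<open>simp add: tact_def\<close>)
qed

section \<open>The kernel of \<open>H\<^sup>\<otimes>\<^sup>n \<rightarrow> Q\<^sup>\<otimes>\<^sup>n\<close>\<close>

lemma RplusH_smult: "x \<in> RplusH A R \<Longrightarrow> (\<lambda>a. c * x a) \<in> RplusH A R"
proof -
  assume "x \<in> RplusH A R"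
  then obtain n :: nat and f g where fg: "\<forall>j<n. f j \<in> R \<and> hcounit A (f j) = 0" and x: "x = (\<lambda>c. \<Sum>j<n. hmult A (f j) (g j) c)"
    unfolding RplusH_def mem_Collect_eq by blast
  have "(\<lambda>a. c * x a) = (\<lambda>a. \<Sum>j<n. hmult A (f j) (\<lambda>b. c * g j b) a)"
    unfolding x hmult_smult_right by (simp add: sum_distrib_left)
  thus ?thesis using fg unfolding RplusH_def mem_Collect_eq by (intro exI[of _ n] exI[of _ f] exI[of _ "\<lambda>j b. c * g j b"] conjI) auto
qed

lemma RplusH_rmult:
  assumes H: "hopf_algebra A" and x: "x \<in> RplusH A R"
  shows "hmult A x h \<in> RplusH A R"
proof -
  obtain n :: nat and f g where fg: "\<forall>j<n. f j \<in> R \<and> hcounit A (f j) = 0" and x: "x = (\<lambda>c. \<Sum>j<n. hmult A (f j) (g j) c)"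
    using x unfolding RplusH_def mem_Collect_eq by blast
  have "hmult A x h = (\<lambda>c. \<Sum>j<n. hmult A (f j) (hmult A (g j) h) c)"
    unfolding x hmult_sum_left hopf_hmult_assoc[OF H] ..
  thus ?thesis using fg unfolding RplusH_def mem_Collect_eq by (intro exI[of _ n] exI[of _ f] exI[of _ "\<lambda>j. hmult A (g j) h"] conjI) auto
qed

lemma hcounit_RplusH:
  assumes H: "hopf_algebra A" and x: "x \<in> RplusH A R"
  shows "hcounit A x = 0"
proof -
  obtain n :: nat and f g where fg: "\<forall>j<n. f j \<in> R \<and> hcounit A (f j) = 0" and x: "x = (\<lambda>c. \<Sum>j<n. hmult A (f j) (g j) c)"
    using x unfolding RplusH_def mem_Collect_eq by blast
  have "hcounit A x = (\<Sum>j<n. hcounit A (f j) * hcounit A (g j))"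
    unfolding x hcounit_sum using hopf_hcounit_hmult[OF H] by simp
  also have "\<dots> = 0" using fg by simp
  finally show ?thesis .
qed

lemma sum_lessThan_add: "(\<Sum>j<m+(m'::nat). f j) = (\<Sum>j<m. f j) + (\<Sum>j<m'. (f (m+j)::'a::comm_monoid_add))"
  by (induction m') (simp_all add: add_ac)

lemma ptens_len: "length xs \<noteq> length F \<Longrightarrow> ptens F xs = 0"
  by (simp add: ptens_def)

lemma ptens_scale:
  assumes "i < length F"
  shows "ptens (F[i := (\<lambda>a. c * (F!i) a)]) = (\<lambda>xs. c * ptens F xs)"
proof (rule ext)
  fix xs
  show "ptens (F[i := (\<lambda>a. c * (F!i) a)]) xs = c * ptens F xs"
  proof (cases "length xs = length F")
    case True
    have fin: "finite {..<length F}" and mem: "i \<in> {..<length F}" using assms by auto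
    have "(\<Prod>j<length F. (F[i := (\<lambda>a. c * (F!i) a)] ! j) (xs!j))
        = (c * (F!i) (xs!i)) * (\<Prod>j\<in>{..<length F} - {i}. (F ! j) (xs!j))"
      using assms by (simp add: prod.remove[OF fin mem])
    also have "\<dots> = c * (\<Prod>j<length F. (F ! j) (xs!j))"
      by (simp add: prod.remove[OF fin mem])
    finally show ?thesis using True by (simp add: ptens_def)
  qed (simp add: ptens_def)
qed

lemma Kn_car: "t \<in> Kn A R n \<Longrightarrow> length xs \<noteq> n \<Longrightarrow> t xs = 0"
  unfolding Kn_def by (auto simp: ptens_len)

lemma Kn_zero: "(\<lambda>xs. 0) \<in> Kn A R n"
  unfolding Kn_def mem_Collect_eq by (intro exI[of _ 0]) auto

lemma Kn_add: "s \<in> Kn A R n \<Longrightarrow> t \<in> Kn A R n \<Longrightarrow> (\<lambda>xs. s xs + t xs) \<in> Kn A R n"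
proof -
  assume "s \<in> Kn A R n" "t \<in> Kn A R n"
  then obtain m m' :: nat and F F' where F: "\<forall>j<m. length (F j) = n \<and> (\<exists>i<n. F j ! i \<in> RplusH A R)"
     and s: "s = (\<lambda>xs. \<Sum>j<m. ptens (F j) xs)"
     and F': "\<forall>j<m'. length (F' j) = n \<and> (\<exists>i<n. F' j ! i \<in> RplusH A R)"
     and t: "t = (\<lambda>xs. \<Sum>j<m'. ptens (F' j) xs)"
    unfolding Kn_def mem_Collect_eq by blast
  define G where "G j = (if j < m then F j else F' (j - m))" for j
  have "(\<lambda>xs. s xs + t xs) = (\<lambda>xs. \<Sum>j<m+m'. ptens (G j) xs)"
    unfolding s t sum_lessThan_add G_def by simp
  moreover have "\<forall>j<m+m'. length (G j) = n \<and> (\<exists>i<n. G j ! i \<in> RplusH A R)"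
    using F F' unfolding G_def by auto
  ultimately show ?thesis unfolding Kn_def mem_Collect_eq by (intro exI[of _ "m+m'"] exI[of _ G] conjI) auto
qed

lemma ptens_in_Kn: "length F = n \<Longrightarrow> i < n \<Longrightarrow> F!i \<in> RplusH A R \<Longrightarrow> ptens F \<in> Kn A R n"
  unfolding Kn_def mem_Collect_eq by (intro exI[of _ 1] exI[of _ "\<lambda>_. F"] conjI) auto

lemma Kn_sum: "finite S \<Longrightarrow> (\<forall>j\<in>S. f j \<in> Kn A R n) \<Longrightarrow> (\<lambda>xs. \<Sum>j\<in>S. f j xs) \<in> Kn A R n"
proof (induction S rule: finite_induct)
  case empty thus ?case using Kn_zero by simp
next
  case (insert x F)
  thus ?case using Kn_add[of "f x" A R n "\<lambda>xs. \<Sum>j\<in>F. f j xs"] by simp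
qed

lemma Kn_smult: "t \<in> Kn A R n \<Longrightarrow> (\<lambda>xs. c * t xs) \<in> Kn A R n"
proof -
  assume "t \<in> Kn A R n"
  then obtain m :: nat and F where F: "\<forall>j<m. length (F j) = n \<and> (\<exists>i<n. F j ! i \<in> RplusH A R)"
     and t: "t = (\<lambda>xs. \<Sum>j<m. ptens (F j) xs)"
    unfolding Kn_def mem_Collect_eq by blast
  have "\<forall>j\<in>{..<m}. (\<lambda>xs. c * ptens (F j) xs) \<in> Kn A R n"
  proof
    fix j assume "j \<in> {..<m}"
    then obtain i where i: "i < n" "F j ! i \<in> RplusH A R" and len: "length (F j) = n" using F by auto
    have "(\<lambda>xs. c * ptens (F j) xs) = ptens ((F j)[i := (\<lambda>a. c * (F j ! i) a)])"
      using ptens_scale[of i "F j" c] i len by simp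
    moreover have "ptens ((F j)[i := (\<lambda>a. c * (F j ! i) a)]) \<in> Kn A R n"
      by (rule ptens_in_Kn[of _ _ i]) (use i len RplusH_smult in auto)
    ultimately show "(\<lambda>xs. c * ptens (F j) xs) \<in> Kn A R n" by simp
  qed
  from Kn_sum[OF _ this] show ?thesis unfolding t by (simp add: sum_distrib_left)
qed

lemma tact_ptens:
  assumes "length F = n"
  shows "tact A n (ptens F) h = (\<lambda>ys. \<Sum>zs\<in>{zs. length zs = n}. itcomul A n h zs * ptens (map (\<lambda>j. hmult A (F!j) (basis_vec (zs!j))) [0..<n]) ys)"
proof (rule ext)
  fix ys
  show "tact A n (ptens F) h ys = (\<Sum>zs\<in>{zs. length zs = n}. itcomul A n h zs * ptens (map (\<lambda>j. hmult A (F!j) (basis_vec (zs!j))) [0..<n]) ys)"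
  proof (cases "length ys = n")
    case True
    have hb: "hmult A f (basis_vec z) y = (\<Sum>x\<in>UNIV. f x * smul A x z y)" for f z y
      unfolding hmult_def by (simp add: basis_vec_simps cong: if_cong)
    have "tact A n (ptens F) h ys = (\<Sum>xs\<in>{xs. length xs = n}. \<Sum>zs\<in>{zs. length zs = n}.
        itcomul A n h zs * (\<Prod>j<n. (F!j) (xs!j) * smul A (xs!j) (zs!j) (ys!j)))"
      using True assms unfolding tact_tpow_mult tpow_mult_def by (auto simp: ptens_def prod.distrib mult_ac intro!: sum.cong)
    also have "\<dots> = (\<Sum>zs\<in>{zs. length zs = n}. itcomul A n h zs * (\<Sum>xs\<in>{xs. length xs = n}. \<Prod>j<n. (F!j) (xs!j) * smul A (xs!j) (zs!j) (ys!j)))"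
      by (subst sum.swap) (simp add: sum_distrib_left)
    also have "\<dots> = (\<Sum>zs\<in>{zs. length zs = n}. itcomul A n h zs * (\<Prod>j<n. hmult A (F!j) (basis_vec (zs!j)) (ys!j)))"
      by (simp add: sum_lists_length_prod[where g = "\<lambda>j x. (F!j) x * smul A x (zs!j) (ys!j)" for zs] hb)
    also have "\<dots> = (\<Sum>zs\<in>{zs. length zs = n}. itcomul A n h zs * ptens (map (\<lambda>j. hmult A (F!j) (basis_vec (zs!j))) [0..<n]) ys)"
      using True by (intro sum.cong refl) (simp add: ptens_def)
    finally show ?thesis .
  next
    case False
    thus ?thesis using assms by (simp add: tact_def ptens_def)
  qed
qed

lemma Kn_act:
  assumes H: "hopf_algebra A" and t: "t \<in> Kn A R n"
  shows "tact A n t h \<in> Kn A R n"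
proof -
  obtain m :: nat and F where F: "\<forall>j<m. length (F j) = n \<and> (\<exists>i<n. F j ! i \<in> RplusH A R)"
     and t: "t = (\<lambda>xs. \<Sum>j<m. ptens (F j) xs)"
    using t unfolding Kn_def mem_Collect_eq by blast
  have eq: "tact A n t h = (\<lambda>ys. \<Sum>j<m. tact A n (ptens (F j)) h ys)"
    unfolding t by (simp add: tact_tpow_mult tpow_mult_sum_left fun_eq_iff)
  have "\<forall>j\<in>{..<m}. tact A n (ptens (F j)) h \<in> Kn A R n"
  proof
    fix j assume "j \<in> {..<m}"
    then obtain i where i: "i < n" "F j ! i \<in> RplusH A R" and len: "length (F j) = n" using F by auto
    have "\<forall>zs\<in>{zs. length zs = n}. (\<lambda>ys. itcomul A n h zs * ptens (map (\<lambda>l. hmult A (F j!l) (basis_vec (zs!l))) [0..<n]) ys) \<in> Kn A R n"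
    proof
      fix zs
      have "ptens (map (\<lambda>l. hmult A (F j!l) (basis_vec (zs!l))) [0..<n]) \<in> Kn A R n"
        by (rule ptens_in_Kn[of _ _ i]) (use i RplusH_rmult[OF H] in auto)
      thus "(\<lambda>ys. itcomul A n h zs * ptens (map (\<lambda>l. hmult A (F j!l) (basis_vec (zs!l))) [0..<n]) ys) \<in> Kn A R n"
        by (rule Kn_smult)
    qed
    from Kn_sum[OF finite_lists_length this] show "tact A n (ptens (F j)) h \<in> Kn A R n"
      unfolding tact_ptens[OF len] .
  qed
  from Kn_sum[OF _ this] show ?thesis unfolding eq by simp
qed

lemma Kn_submod:
  assumes H: "hopf_algebra A"
  shows "submod (Kn A R n) (Htens A n)"
  unfolding submod_def
proof (intro conjI ballI allI)
  show "Kn A R n \<subseteq> mcar (Htens A n)" by (auto simp: Htens_def Kn_car)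
  show "mzero (Htens A n) \<in> Kn A R n" by (simp add: Htens_def Kn_zero)
  show "madd (Htens A n) u v \<in> Kn A R n" if "u \<in> Kn A R n" "v \<in> Kn A R n" for u v
    using Kn_add[OF that] by (simp add: Htens_def)
  show "\<exists>w\<in>Kn A R n. madd (Htens A n) u w = mzero (Htens A n)" if "u \<in> Kn A R n" for u
    using Kn_smult[OF that, of "-1"] by (intro bexI[of _ "\<lambda>xs. -1 * u xs"]) (auto simp: Htens_def)
  show "mact (Htens A n) u h \<in> Kn A R n" if "u \<in> Kn A R n" for u h
    using Kn_act[OF H that] by (simp add: Htens_def)
qed

definition mneg :: "('h, 'v, 'z) rmod_scheme \<Rightarrow> 'v \<Rightarrow> 'v" where
  "mneg M u = (SOME w. w \<in> mcar M \<and> madd M u w = mzero M)"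

fun msum :: "('h, 'v, 'z) rmod_scheme \<Rightarrow> (nat \<Rightarrow> 'v) \<Rightarrow> nat \<Rightarrow> 'v" where
  "msum M f 0 = mzero M"
| "msum M f (Suc d) = madd M (msum M f d) (f d)"

lemma msum_cong: "(\<And>i. i < d \<Longrightarrow> f i = g i) \<Longrightarrow> msum M f d = msum M g d"
  by (induction d) auto

definition spanned_by :: "('k::field,'i::finite) hopf_data \<Rightarrow> ('i \<Rightarrow> 'k, 'v) rmod \<Rightarrow> nat \<Rightarrow> (nat \<Rightarrow> 'v) \<Rightarrow> bool" where
  "spanned_by A M d v \<longleftrightarrow> (\<forall>i<d. v i \<in> mcar M) \<and>
     (\<forall>u\<in>mcar M. \<exists>c. u = msum M (\<lambda>i. mact M (v i) (hscal A (c i))) d)"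

definition generated_by :: "('h, 'v) rmod \<Rightarrow> nat \<Rightarrow> (nat \<Rightarrow> 'v) \<Rightarrow> bool" where
  "generated_by M r x \<longleftrightarrow> (\<forall>j<r. x j \<in> mcar M) \<and>
     (\<forall>u\<in>mcar M. \<exists>hs. u = msum M (\<lambda>j. mact M (x j) (hs j)) r)"

lemma
  assumes "spanned_by A M d v"
  shows spanned_by_car: "i < d \<Longrightarrow> v i \<in> mcar M"
    and spanned_byE: "u \<in> mcar M \<Longrightarrow> (\<And>c. u = msum M (\<lambda>i. mact M (v i) (hscal A (c i))) d \<Longrightarrow> P) \<Longrightarrow> P"
  using assms unfolding spanned_by_def by simp_all (meson)

lemma spanned_by_imp_generated_by:
  assumes "spanned_by A M d v"
  shows "generated_by M d v"
  unfolding generated_by_def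
proof (intro conjI allI impI ballI)
  show "i < d \<Longrightarrow> v i \<in> mcar M" for i
    using assms by (rule spanned_by_car)
  fix u assume "u \<in> mcar M"
  with assms obtain c where "u = msum M (\<lambda>i. mact M (v i) (hscal A (c i))) d"
    by (rule spanned_byE)
  thus "\<exists>hs. u = msum M (\<lambda>j. mact M (v j) (hs j)) d" by (intro exI[of _ "\<lambda>i. hscal A (c i)"])
qed

locale right_module =
  fixes A :: "('k::field,'i::finite) hopf_data" and M :: "('i \<Rightarrow> 'k, 'v, 'z) rmod_scheme"
  assumes H: "hopf_algebra A" and RM: "rmodule A M"
begin

lemma add_closed: "u \<in> mcar M \<Longrightarrow> v \<in> mcar M \<Longrightarrow> madd M u v \<in> mcar M"
  using RM unfolding rmodule_def by auto

lemma zero_closed: "mzero M \<in> mcar M"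
  using RM unfolding rmodule_def by auto

lemma add_assoc: "u \<in> mcar M \<Longrightarrow> v \<in> mcar M \<Longrightarrow> w \<in> mcar M \<Longrightarrow>
      madd M (madd M u v) w = madd M u (madd M v w)"
  using RM unfolding rmodule_def by auto

lemma add_comm: "u \<in> mcar M \<Longrightarrow> v \<in> mcar M \<Longrightarrow> madd M u v = madd M v u"
  using RM unfolding rmodule_def by auto

lemma zero_add: "u \<in> mcar M \<Longrightarrow> madd M (mzero M) u = u"
  using RM unfolding rmodule_def by auto

lemma ex_neg: "u \<in> mcar M \<Longrightarrow> \<exists>w\<in>mcar M. madd M u w = mzero M"
  using RM unfolding rmodule_def by (metis (no_types, lifting))

lemma act_closed: "u \<in> mcar M \<Longrightarrow> mact M u h \<in> mcar M"
  using RM unfolding rmodule_def by auto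

lemma act_add: "u \<in> mcar M \<Longrightarrow> v \<in> mcar M \<Longrightarrow> mact M (madd M u v) h = madd M (mact M u h) (mact M v h)"
  using RM unfolding rmodule_def by auto

lemma act_hadd: "u \<in> mcar M \<Longrightarrow> mact M u (\<lambda>a. h a + h' a) = madd M (mact M u h) (mact M u h')"
  using RM unfolding rmodule_def by auto

lemma act_mult: "u \<in> mcar M \<Longrightarrow> mact M u (hmult A h h') = mact M (mact M u h) h'"
  using RM unfolding rmodule_def by auto

lemma act_one: "u \<in> mcar M \<Longrightarrow> mact M u (hone A) = u"
  using RM unfolding rmodule_def by auto

lemma add_zero: "u \<in> mcar M \<Longrightarrow> madd M u (mzero M) = u"
  using add_comm zero_add zero_closed by metis

lemma neg_closed: "u \<in> mcar M \<Longrightarrow> mneg M u \<in> mcar M"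
  and add_neg: "u \<in> mcar M \<Longrightarrow> madd M u (mneg M u) = mzero M"
  using someI_ex[OF ex_neg[unfolded Bex_def]] unfolding mneg_def by blast+

lemma neg_add: "u \<in> mcar M \<Longrightarrow> madd M (mneg M u) u = mzero M"
  using add_neg add_comm neg_closed by metis

lemma add_left_cancel:
  assumes "u \<in> mcar M" "v \<in> mcar M" "w \<in> mcar M" "madd M u v = madd M u w"
  shows "v = w"
proof -
  have "v = madd M (madd M (mneg M u) u) v" using assms neg_add zero_add by simp
  also have "\<dots> = madd M (mneg M u) (madd M u v)" using assms add_assoc neg_closed by simp
  also have "\<dots> = madd M (mneg M u) (madd M u w)" using assms by simp
  also have "\<dots> = madd M (madd M (mneg M u) u) w" using assms add_assoc neg_closed by simp
  also have "\<dots> = w" using assms neg_add zero_add by simp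
  finally show ?thesis .
qed

lemma neg_unique: "u \<in> mcar M \<Longrightarrow> w \<in> mcar M \<Longrightarrow> madd M u w = mzero M \<Longrightarrow> w = mneg M u"
  using add_left_cancel[of u w "mneg M u"] add_neg neg_closed by simp

lemma act_zero_h: "u \<in> mcar M \<Longrightarrow> mact M u (\<lambda>_. 0) = mzero M"
proof -
  assume u: "u \<in> mcar M"
  have "madd M (mact M u (\<lambda>_. 0)) (mact M u (\<lambda>_. 0)) = madd M (mact M u (\<lambda>_. 0)) (mzero M)"
    using act_hadd[OF u, of "\<lambda>_. 0" "\<lambda>_. 0"] add_zero act_closed u by simp
  thus ?thesis using add_left_cancel act_closed zero_closed u by blast
qed

lemma zero_act: "mact M (mzero M) h = mzero M"
proof -
  have "madd M (mact M (mzero M) h) (mact M (mzero M) h) = madd M (mact M (mzero M) h) (mzero M)"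
    using act_add[OF zero_closed zero_closed, of h] zero_add[OF zero_closed] add_zero act_closed zero_closed by simp
  thus ?thesis using add_left_cancel act_closed zero_closed by blast
qed

lemma act_eq_iff_act_diff_eq_zero:
  assumes u: "u \<in> mcar M"
  shows "mact M u h = mact M u h' \<longleftrightarrow> mact M u (\<lambda>a. h a - h' a) = mzero M"
proof -
  have "mact M u h = madd M (mact M u h') (mact M u (\<lambda>a. h a - h' a))"
    using act_hadd[OF u, of h' "\<lambda>a. h a - h' a"] by simp
  moreover have "mact M u h' = madd M (mact M u h') (mzero M)"
    using add_zero act_closed u by simp
  ultimately show ?thesis
    using add_left_cancel act_closed zero_closed u by metis
qed

lemma act_hscal_commute: "u \<in> mcar M \<Longrightarrow> mact M (mact M u (hscal A c)) h = mact M (mact M u h) (hscal A c)"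
  using act_mult[symmetric] hmult_hscal_left[OF H] hmult_hscal_right[OF H] by metis

lemma add_swap4: "a \<in> mcar M \<Longrightarrow> b \<in> mcar M \<Longrightarrow> c \<in> mcar M \<Longrightarrow> d \<in> mcar M \<Longrightarrow>
   madd M (madd M a b) (madd M c d) = madd M (madd M a c) (madd M b d)"
  by (metis add_assoc add_comm add_closed)

lemma msum_closed: "(\<And>i. i < d \<Longrightarrow> f i \<in> mcar M) \<Longrightarrow> msum M f d \<in> mcar M"
  by (induction d) (auto intro: add_closed zero_closed)

lemma msum_act: "(\<And>i. i < d \<Longrightarrow> f i \<in> mcar M) \<Longrightarrow> mact M (msum M f d) h = msum M (\<lambda>i. mact M (f i) h) d"
  by (induction d) (auto simp: zero_act act_add msum_closed)

lemma msum_add: "(\<And>i. i < d \<Longrightarrow> f i \<in> mcar M) \<Longrightarrow> (\<And>i. i < d \<Longrightarrow> g i \<in> mcar M) \<Longrightarrow>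
   msum M (\<lambda>i. madd M (f i) (g i)) d = madd M (msum M f d) (msum M g d)"
  by (induction d) (auto simp: zero_add zero_closed add_swap4 msum_closed)

lemma msum_zero: "msum M (\<lambda>i. mzero M) d = mzero M"
  by (induction d) (auto simp: zero_add zero_closed)

end

lemma rhom_comp: "rhom M N f \<Longrightarrow> rhom N P g \<Longrightarrow> rhom M P (g \<circ> f)"
  unfolding rhom_def by auto

lemma riso_trans: "riso M N \<Longrightarrow> riso N P \<Longrightarrow> riso M P"
  unfolding riso_def using rhom_comp bij_betw_trans by metis

lemma dsum_rmodule:
  assumes "right_module A M"
  shows "rmodule A (dsum m M)"
proof -
  interpret right_module A M by fact
  have nth: "u j \<in> mcar M" if "u \<in> mcar (dsum m M)" for u j
    using that zero_closed by (cases "j < m") (auto simp: dsum_def)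
  show ?thesis unfolding rmodule_def
  proof (intro conjI ballI allI)
    show "madd (dsum m M) u v \<in> mcar (dsum m M)" if "u \<in> mcar (dsum m M)" "v \<in> mcar (dsum m M)" for u v
      using that by (auto simp: dsum_def add_closed zero_add zero_closed)
    show "mzero (dsum m M) \<in> mcar (dsum m M)"
      by (auto simp: dsum_def zero_closed)
    show "mact (dsum m M) u h \<in> mcar (dsum m M)" if "u \<in> mcar (dsum m M)" for u h
      using that by (auto simp: dsum_def act_closed zero_act)
    show "\<exists>w\<in>mcar (dsum m M). madd (dsum m M) u w = mzero (dsum m M)" if u: "u \<in> mcar (dsum m M)" for u
    proof (rule bexI[of _ "\<lambda>j. if j < m then mneg M (u j) else mzero M"])
      show "madd (dsum m M) u (\<lambda>j. if j < m then mneg M (u j) else mzero M) = mzero (dsum m M)"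
        using u by (auto simp: dsum_def fun_eq_iff add_neg zero_add zero_closed)
      show "(\<lambda>j. if j < m then mneg M (u j) else mzero M) \<in> mcar (dsum m M)"
        using u by (auto simp: dsum_def neg_closed)
    qed
    show "madd (dsum m M) (mzero (dsum m M)) u = u" if u: "u \<in> mcar (dsum m M)" for u
      using nth[OF u] by (simp add: dsum_def zero_add)
    show "madd (dsum m M) u v = madd (dsum m M) v u"
      if u: "u \<in> mcar (dsum m M)" and v: "v \<in> mcar (dsum m M)" for u v
      using nth[OF u] nth[OF v] by (simp add: dsum_def add_comm)
    show "madd (dsum m M) (madd (dsum m M) u v) w = madd (dsum m M) u (madd (dsum m M) v w)"
      if u: "u \<in> mcar (dsum m M)" and v: "v \<in> mcar (dsum m M)" and w: "w \<in> mcar (dsum m M)" for u v w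
      using nth[OF u] nth[OF v] nth[OF w] by (simp add: dsum_def add_assoc)
    show "mact (dsum m M) (madd (dsum m M) u v) h = madd (dsum m M) (mact (dsum m M) u h) (mact (dsum m M) v h)"
      if u: "u \<in> mcar (dsum m M)" and v: "v \<in> mcar (dsum m M)" for u v h
      using nth[OF u] nth[OF v] by (simp add: dsum_def act_add)
    show "mact (dsum m M) u (\<lambda>a. h a + h' a) = madd (dsum m M) (mact (dsum m M) u h) (mact (dsum m M) u h')"
      if u: "u \<in> mcar (dsum m M)" for u h h'
      using nth[OF u] by (simp add: dsum_def act_hadd)
    show "mact (dsum m M) u (hmult A h h') = mact (dsum m M) (mact (dsum m M) u h) h'"
      if u: "u \<in> mcar (dsum m M)" for u h h'
      using nth[OF u] by (simp add: dsum_def act_mult)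
    show "mact (dsum m M) u (hone A) = u" if u: "u \<in> mcar (dsum m M)" for u
      using nth[OF u] by (simp add: dsum_def act_one)
  qed
qed

lemma quot_sel:
  "mcar (quot M W) = mcoset M W ` mcar M"
  "madd (quot M W) C D = {madd M c d | c d. c \<in> C \<and> d \<in> D}"
  "mzero (quot M W) = W"
  "mact (quot M W) C h = {madd M (mact M c h) w | c w. c \<in> C \<and> w \<in> W}"
  by (simp_all add: quot_def)

locale quotient_module = right_module A M for A :: "('k::field,'i::finite) hopf_data" and M :: "('i \<Rightarrow> 'k, 'v) rmod" +
  fixes W assumes SW: "submod W M"
begin

lemma W_sub: "w \<in> W \<Longrightarrow> w \<in> mcar M" using SW unfolding submod_def by blast
lemma W_zero: "mzero M \<in> W" using SW unfolding submod_def by blast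
lemma W_add: "u \<in> W \<Longrightarrow> v \<in> W \<Longrightarrow> madd M u v \<in> W" using SW unfolding submod_def by blast
lemma W_act: "u \<in> W \<Longrightarrow> mact M u h \<in> W" using SW unfolding submod_def by blast
lemma W_neg: "u \<in> W \<Longrightarrow> mneg M u \<in> W"
proof -
  assume u: "u \<in> W"
  then obtain w where "w \<in> W" "madd M u w = mzero M" using SW unfolding submod_def by blast
  thus ?thesis using neg_unique[of u w] W_sub u by blast
qed

lemma coset_mem: "v \<in> mcar M \<Longrightarrow> v \<in> mcoset M W v"
  unfolding mcoset_def using W_zero add_zero by force

lemma coset_shift: "u \<in> mcar M \<Longrightarrow> w0 \<in> W \<Longrightarrow> mcoset M W (madd M u w0) = mcoset M W u"
proof (rule set_eqI, rule iffI)
  fix x assume u: "u \<in> mcar M" and w0: "w0 \<in> W"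
  { assume "x \<in> mcoset M W (madd M u w0)"
    then obtain w where w: "w \<in> W" "x = madd M (madd M u w0) w" unfolding mcoset_def by blast
    hence "x = madd M u (madd M w0 w)" using add_assoc u W_sub w0 by simp
    thus "x \<in> mcoset M W u" unfolding mcoset_def using W_add w0 w by blast }
  { assume "x \<in> mcoset M W u"
    then obtain w where w: "w \<in> W" "x = madd M u w" unfolding mcoset_def by blast
    have "madd M (madd M u w0) (madd M (mneg M w0) w) = madd M u (madd M (madd M w0 (mneg M w0)) w)"
      using u w0 w W_sub neg_closed add_assoc add_closed by simp
    also have "\<dots> = x" using u w0 w W_sub add_neg zero_add by simp
    finally have "x = madd M (madd M u w0) (madd M (mneg M w0) w)" by simp
    moreover have "madd M (mneg M w0) w \<in> W" using W_add W_neg w0 w by blast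
    ultimately show "x \<in> mcoset M W (madd M u w0)" unfolding mcoset_def by blast }
qed

lemma coset_eq_iff:
  assumes u: "u \<in> mcar M" and v: "v \<in> mcar M"
  shows "mcoset M W u = mcoset M W v \<longleftrightarrow> (\<exists>w\<in>W. v = madd M u w)"
proof
  assume "mcoset M W u = mcoset M W v"
  hence "v \<in> mcoset M W u" using coset_mem[OF v] by simp
  thus "\<exists>w\<in>W. v = madd M u w" unfolding mcoset_def by blast
next
  assume "\<exists>w\<in>W. v = madd M u w"
  thus "mcoset M W u = mcoset M W v" using coset_shift u by metis
qed

lemma coset_zero: "mcoset M W (mzero M) = W"
  unfolding mcoset_def using zero_add W_sub by force

lemma coset_W_iff: "u \<in> mcar M \<Longrightarrow> mcoset M W u = W \<longleftrightarrow> u \<in> W"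
proof
  assume u: "u \<in> mcar M" and "mcoset M W u = W"
  thus "u \<in> W" using coset_mem by blast
next
  assume u: "u \<in> mcar M" and "u \<in> W"
  thus "mcoset M W u = W" using coset_shift[OF zero_closed, of u] zero_add coset_zero by simp
qed

lemma coset_add: "u \<in> mcar M \<Longrightarrow> v \<in> mcar M \<Longrightarrow> madd (quot M W) (mcoset M W u) (mcoset M W v) = mcoset M W (madd M u v)"
proof (rule set_eqI, rule iffI)
  fix x assume u: "u \<in> mcar M" and v: "v \<in> mcar M"
  { assume "x \<in> madd (quot M W) (mcoset M W u) (mcoset M W v)"
    then obtain w1 w2 where w: "w1 \<in> W" "w2 \<in> W" "x = madd M (madd M u w1) (madd M v w2)"
      unfolding quot_sel mcoset_def by blast
    hence "x = madd M (madd M u v) (madd M w1 w2)" using add_swap4 u v W_sub by simp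
    thus "x \<in> mcoset M W (madd M u v)" unfolding mcoset_def using W_add w by blast }
  { assume "x \<in> mcoset M W (madd M u v)"
    then obtain w where w: "w \<in> W" "x = madd M (madd M u v) w" unfolding mcoset_def by blast
    have "madd M (madd M u w) v = madd M u (madd M w v)" using add_assoc u v w W_sub by simp
    also have "\<dots> = madd M u (madd M v w)" using add_comm v w W_sub by simp
    also have "\<dots> = x" using add_assoc u v w W_sub by simp
    finally have x: "x = madd M (madd M u w) v" by simp
    have "madd M u w \<in> mcoset M W u" using w unfolding mcoset_def by blast
    moreover have "v \<in> mcoset M W v" using coset_mem v by blast
    ultimately show "x \<in> madd (quot M W) (mcoset M W u) (mcoset M W v)"
      unfolding quot_sel x by blast }
qed

lemma coset_act: "u \<in> mcar M \<Longrightarrow> mact (quot M W) (mcoset M W u) h = mcoset M W (mact M u h)"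
proof (rule set_eqI, rule iffI)
  fix x assume u: "u \<in> mcar M"
  { assume "x \<in> mact (quot M W) (mcoset M W u) h"
    then obtain w1 w where w: "w1 \<in> W" "w \<in> W" "x = madd M (mact M (madd M u w1) h) w"
      unfolding quot_sel mcoset_def by blast
    hence "x = madd M (mact M u h) (madd M (mact M w1 h) w)" using act_add add_assoc u W_sub act_closed by simp
    thus "x \<in> mcoset M W (mact M u h)" unfolding mcoset_def using W_add W_act w by blast }
  { assume "x \<in> mcoset M W (mact M u h)"
    then obtain w where w: "w \<in> W" "x = madd M (mact M u h) w" unfolding mcoset_def by blast
    moreover have "u \<in> mcoset M W u" using coset_mem u by blast
    ultimately show "x \<in> mact (quot M W) (mcoset M W u) h"
      unfolding quot_sel by blast }
qed

lemma quot_car: "C \<in> mcar (quot M W) \<Longrightarrow> (\<And>u. u \<in> mcar M \<Longrightarrow> C = mcoset M W u \<Longrightarrow> P) \<Longrightarrow> P"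
  unfolding quot_sel by blast

lemma quot_carI: "u \<in> mcar M \<Longrightarrow> mcoset M W u \<in> mcar (quot M W)"
  unfolding quot_sel by blast

lemma quot_zero': "mzero (quot M W) = mcoset M W (mzero M)"
  by (simp add: quot_sel coset_zero)

lemma quot_rmodule: "rmodule A (quot M W)"
  unfolding rmodule_def
proof (intro conjI ballI allI)
  show "madd (quot M W) C D \<in> mcar (quot M W)" if "C \<in> mcar (quot M W)" "D \<in> mcar (quot M W)" for C D
    by (rule quot_car[OF that(1)], rule quot_car[OF that(2)]) (simp add: coset_add add_closed quot_carI)
  show "mzero (quot M W) \<in> mcar (quot M W)"
    unfolding quot_zero' by (rule quot_carI[OF zero_closed])
  show "madd (quot M W) (madd (quot M W) C D) E = madd (quot M W) C (madd (quot M W) D E)"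
    if "C \<in> mcar (quot M W)" "D \<in> mcar (quot M W)" "E \<in> mcar (quot M W)" for C D E
    by (rule quot_car[OF that(1)], rule quot_car[OF that(2)], rule quot_car[OF that(3)]) (simp add: coset_add add_closed add_assoc)
  show "madd (quot M W) C D = madd (quot M W) D C" if "C \<in> mcar (quot M W)" "D \<in> mcar (quot M W)" for C D
    by (rule quot_car[OF that(1)], rule quot_car[OF that(2)]) (simp add: coset_add add_comm)
  show "madd (quot M W) (mzero (quot M W)) C = C" if "C \<in> mcar (quot M W)" for C
    by (rule quot_car[OF that(1)]) (simp add: quot_zero' coset_add zero_closed zero_add)
  show "\<exists>D\<in>mcar (quot M W). madd (quot M W) C D = mzero (quot M W)" if "C \<in> mcar (quot M W)" for C
  proof (rule quot_car[OF that(1)])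
    fix u assume u: "u \<in> mcar M" "C = mcoset M W u"
    have "madd (quot M W) C (mcoset M W (mneg M u)) = mzero (quot M W)"
      using u by (simp add: coset_add neg_closed add_neg quot_zero')
    thus ?thesis using u neg_closed quot_carI by blast
  qed
  show "mact (quot M W) C h \<in> mcar (quot M W)" if "C \<in> mcar (quot M W)" for C h
    by (rule quot_car[OF that(1)]) (simp add: coset_act act_closed quot_carI)
  show "mact (quot M W) (madd (quot M W) C D) h = madd (quot M W) (mact (quot M W) C h) (mact (quot M W) D h)"
    if "C \<in> mcar (quot M W)" "D \<in> mcar (quot M W)" for C D h
    by (rule quot_car[OF that(1)], rule quot_car[OF that(2)]) (simp add: coset_add coset_act add_closed act_closed act_add)
  show "mact (quot M W) C (\<lambda>a. h a + h' a) = madd (quot M W) (mact (quot M W) C h) (mact (quot M W) C h')"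
    if "C \<in> mcar (quot M W)" for C h h'
    by (rule quot_car[OF that(1)]) (simp add: coset_add coset_act act_closed act_hadd)
  show "mact (quot M W) C (hmult A h h') = mact (quot M W) (mact (quot M W) C h) h'" if "C \<in> mcar (quot M W)" for C h h'
    by (rule quot_car[OF that(1)]) (simp add: coset_act act_closed act_mult)
  show "mact (quot M W) C (hone A) = C" if "C \<in> mcar (quot M W)" for C
    by (rule quot_car[OF that(1)]) (simp add: coset_act act_one)
qed

lemma msum_quot: "(\<And>i. i < d \<Longrightarrow> f i \<in> mcar M) \<Longrightarrow> msum (quot M W) (\<lambda>i. mcoset M W (f i)) d = mcoset M W (msum M f d)"
  by (induction d) (simp_all add: quot_zero' coset_add msum_closed)


lemma quot_spanned_by:
  assumes span: "spanned_by A M d v"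
  shows "spanned_by A (quot M W) d (\<lambda>i. mcoset M W (v i))"
  unfolding spanned_by_def
proof (intro conjI allI impI ballI)
  have v: "v i \<in> mcar M" if "i < d" for i
    using span that by (rule spanned_by_car)
  thus "i < d \<Longrightarrow> mcoset M W (v i) \<in> mcar (quot M W)" for i
    using quot_carI by blast
  fix C assume "C \<in> mcar (quot M W)"
  then obtain u where u: "u \<in> mcar M" "C = mcoset M W u" by (rule quot_car)
  obtain c where c: "u = msum M (\<lambda>i. mact M (v i) (hscal A (c i))) d"
    using span u(1) by (rule spanned_byE)
  have "C = msum (quot M W) (\<lambda>i. mcoset M W (mact M (v i) (hscal A (c i)))) d"
    unfolding u(2) c by (rule msum_quot[symmetric]) (use v act_closed in auto)
  also have "\<dots> = msum (quot M W) (\<lambda>i. mact (quot M W) (mcoset M W (v i)) (hscal A (c i))) d"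
    by (rule msum_cong) (simp add: coset_act v)
  finally show "\<exists>c. C = msum (quot M W) (\<lambda>i. mact (quot M W) (mcoset M W (v i)) (hscal A (c i))) d"
    by blast
qed

end

lemma msum_Htens: "msum (Htens A n) f d = (\<lambda>ys. \<Sum>i<d. f i ys)"
  by (induction d) (auto simp: Htens_def)

lemma Htens_quotient_module: "hopf_algebra A \<Longrightarrow> quotient_module A (Htens A n) (Kn A R n)"
  unfolding quotient_module_def quotient_module_axioms_def right_module_def using Htens_rmodule Kn_submod by blast

lemma Qtens_rmodule: "hopf_algebra A \<Longrightarrow> rmodule A (Qtens A R n)"
  unfolding Qtens_def using Htens_quotient_module quotient_module.quot_rmodule by blast

lemma Htens_spanned_by:
  fixes A :: "('k::field,'i::finite) hopf_data"
  assumes H: "hopf_algebra A" and es: "set es = {xs. length xs = n}" "distinct es"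
  shows "spanned_by A (Htens A n) (length es) (\<lambda>i. basis_vec (es!i))"
  unfolding spanned_by_def
proof (intro conjI allI impI ballI)
  have e_car: "basis_vec (es!i) \<in> mcar (Htens A n)" if "i < length es" for i
    using that es nth_mem[OF that] by (auto simp: Htens_def basis_vec_def)
  thus "i < length es \<Longrightarrow> basis_vec (es!i) \<in> mcar (Htens A n)" for i .
  fix t :: "'i list \<Rightarrow> 'k" assume t: "t \<in> mcar (Htens A n)"
  have "msum (Htens A n) (\<lambda>i. mact (Htens A n) (basis_vec (es!i)) (hscal A (t (es!i)))) (length es)
      = (\<lambda>ys. \<Sum>i<length es. t (es!i) * basis_vec (es!i) ys)"
    unfolding msum_Htens using e_car tact_hscal[OF H] by (simp add: Htens_def)
  also have "\<dots> = (\<lambda>ys. \<Sum>xs\<in>set es. t xs * basis_vec xs ys)"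
  proof (rule ext)
    fix ys
    show "(\<Sum>i<length es. t (es!i) * basis_vec (es!i) ys) = (\<Sum>xs\<in>set es. t xs * basis_vec xs ys)"
      using sum.reindex_bij_betw[OF bij_betw_nth[OF es(2) refl refl], of "\<lambda>xs. t xs * basis_vec xs ys"]
      by simp
  qed
  also have "\<dots> = t"
  proof (rule ext)
    fix ys
    have "(\<Sum>xs\<in>set es. t xs * basis_vec xs ys) = (if ys \<in> set es then t ys else 0)"
      by (simp add: basis_vec_def if_distrib[of "\<lambda>x. _ * x"] eq_commute cong: if_cong)
    also have "\<dots> = t ys" using t es(1) by (auto simp: Htens_def)
    finally show "(\<Sum>xs\<in>set es. t xs * basis_vec xs ys) = t ys" .
  qed
  finally show "\<exists>c. t = msum (Htens A n) (\<lambda>i. mact (Htens A n) (basis_vec (es!i)) (hscal A (c i))) (length es)"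
    by (intro exI[of _ "\<lambda>i. t (es!i)"]) simp
qed

lemma Qtens_spanned:
  fixes A :: "('k::field,'i::finite) hopf_data"
  assumes H: "hopf_algebra A"
  shows "\<exists>d v. spanned_by A (Qtens A R n) d v"
proof -
  obtain es :: "'i list list" where es: "set es = {xs. length xs = n}" "distinct es"
    using finite_distinct_list[OF finite_lists_length] by blast
  show ?thesis
    using quotient_module.quot_spanned_by[OF Htens_quotient_module[OF H] Htens_spanned_by[OF H es]]
    unfolding Qtens_def by blast
qed

lemma Qtens_finitely_generated:
  assumes "hopf_algebra A"
  shows "\<exists>r x. generated_by (Qtens A R n) r x"
proof -
  obtain d v where "spanned_by A (Qtens A R n) d v"
    using Qtens_spanned[OF assms] by blast
  hence "generated_by (Qtens A R n) d v"
    by (rule spanned_by_imp_generated_by)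
  thus ?thesis by blast
qed

section \<open>Transfer of \<open>\<sigma>\<close>\<close>

lemma submod_transport:
  fixes A :: "('k::field,'i::finite) hopf_data" and M :: "('i \<Rightarrow> 'k, 'v) rmod" and N :: "('i \<Rightarrow> 'k, 'w) rmod"
    and f :: "(nat \<Rightarrow> nat \<Rightarrow> 'i \<Rightarrow> 'k) \<Rightarrow> 'v" and g :: "(nat \<Rightarrow> nat \<Rightarrow> 'i \<Rightarrow> 'k) \<Rightarrow> 'w"
  assumes "right_module A M" and W: "submod W M"
    and f_car: "\<And>p. f p \<in> mcar M"
    and f_add: "\<And>p q. madd M (f p) (f q) = f (\<lambda>l j a. p l j a + q l j a)"
    and f_act: "\<And>p h. mact M (f p) h = f (\<lambda>l j. hmult A (p l j) h)"
    and f_zero: "f (\<lambda>l j a. 0) = mzero M"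
    and g_car: "\<And>p. g p \<in> mcar N"
    and g_add: "\<And>p q. madd N (g p) (g q) = g (\<lambda>l j a. p l j a + q l j a)"
    and g_act: "\<And>p h. mact N (g p) h = g (\<lambda>l j. hmult A (p l j) h)"
    and g_zero: "g (\<lambda>l j a. 0) = mzero N"
  shows "submod {g p | p. f p \<in> W} N"
proof -
  interpret right_module A M by fact
  have sum_neg: "(\<lambda>l j a. p l j a + - p l j a) = (\<lambda>l j a. 0)" for p :: "nat \<Rightarrow> nat \<Rightarrow> 'i \<Rightarrow> 'k"
    by simp
  have W_neg: "f (\<lambda>l j a. - p l j a) \<in> W" if p: "f p \<in> W" for p
  proof -
    obtain w where w: "w \<in> W" "madd M (f p) w = mzero M"
      using W p unfolding submod_def by blast
    have "madd M (f p) (f (\<lambda>l j a. - p l j a)) = mzero M"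
      unfolding f_add sum_neg f_zero ..
    hence "f (\<lambda>l j a. - p l j a) = mneg M (f p)"
      by (rule neg_unique[OF f_car f_car])
    also have "\<dots> = w"
      using neg_unique[OF f_car _ w(2)] w(1) W unfolding submod_def by blast
    finally show ?thesis using w(1) by simp
  qed
  have W_zero: "mzero M \<in> W" and W_add: "\<And>u u'. u \<in> W \<Longrightarrow> u' \<in> W \<Longrightarrow> madd M u u' \<in> W"
    and W_act: "\<And>u h. u \<in> W \<Longrightarrow> mact M u h \<in> W"
    using W unfolding submod_def by auto
  let ?V = "{g p | p. f p \<in> W}"
  show ?thesis
    unfolding submod_def
  proof (intro conjI ballI allI subsetI)
    show "u \<in> mcar N" if "u \<in> ?V" for u
      using that g_car by blast
    have "f (\<lambda>l j a. 0) \<in> W" unfolding f_zero by (rule W_zero)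
    thus "mzero N \<in> ?V" unfolding g_zero[symmetric] by blast
    show "madd N u u' \<in> ?V" if u: "u \<in> ?V" and u': "u' \<in> ?V" for u u'
    proof -
      obtain p p' where p: "u = g p" "f p \<in> W" and p': "u' = g p'" "f p' \<in> W"
        using u u' by blast
      have "f (\<lambda>l j a. p l j a + p' l j a) \<in> W"
        unfolding f_add[symmetric] using W_add p(2) p'(2) .
      thus ?thesis unfolding p(1) p'(1) g_add by blast
    qed
    show "mact N u h \<in> ?V" if u: "u \<in> ?V" for u h
    proof -
      obtain p where p: "u = g p" "f p \<in> W" using u by blast
      have "f (\<lambda>l j. hmult A (p l j) h) \<in> W"
        unfolding f_act[symmetric] using W_act p(2) .
      thus ?thesis unfolding p(1) g_act by blast
    qed
    show "\<exists>u'\<in>?V. madd N u u' = mzero N" if u: "u \<in> ?V" for u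
    proof -
      obtain p where p: "u = g p" "f p \<in> W" using u by blast
      have "madd N (g p) (g (\<lambda>l j a. - p l j a)) = mzero N"
        unfolding g_add sum_neg g_zero ..
      thus ?thesis using p W_neg by blast
    qed
  qed
qed

lemma riso_transport:
  fixes A :: "('k::field,'i::finite) hopf_data" and M :: "('i \<Rightarrow> 'k, 'v) rmod" and N :: "('i \<Rightarrow> 'k, 'w) rmod"
    and f :: "(nat \<Rightarrow> nat \<Rightarrow> 'i \<Rightarrow> 'k) \<Rightarrow> 'v" and g :: "(nat \<Rightarrow> nat \<Rightarrow> 'i \<Rightarrow> 'k) \<Rightarrow> 'w"
  assumes f_add: "\<And>p q. madd M (f p) (f q) = f (\<lambda>l j a. p l j a + q l j a)"
    and f_act: "\<And>p h. mact M (f p) h = f (\<lambda>l j. hmult A (p l j) h)"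
    and g_add: "\<And>p q. madd N (g p) (g q) = g (\<lambda>l j a. p l j a + q l j a)"
    and g_act: "\<And>p h. mact N (g p) h = g (\<lambda>l j. hmult A (p l j) h)"
    and fg: "\<And>p q. f p = f q \<longleftrightarrow> g p = g q"
    and S: "S \<subseteq> range f"
  shows "riso (M\<lparr>mcar := S\<rparr>) (N\<lparr>mcar := {g p | p. f p \<in> S}\<rparr>)"
proof -
  define \<phi> where "\<phi> C = g (SOME p. f p = C)" for C
  have \<phi>: "\<phi> (f p) = g p" for p
    unfolding \<phi>_def using someI[of "\<lambda>q. f q = f p" p] fg by blast
  have S_f: "\<exists>p. u = f p \<and> f p \<in> S" if "u \<in> S" for u
    using that S by blast
  have "rhom (M\<lparr>mcar := S\<rparr>) (N\<lparr>mcar := {g p | p. f p \<in> S}\<rparr>) \<phi>"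
    unfolding rhom_def
  proof (intro conjI ballI allI)
    show "\<phi> u \<in> mcar (N\<lparr>mcar := {g p | p. f p \<in> S}\<rparr>)" if "u \<in> mcar (M\<lparr>mcar := S\<rparr>)" for u
      using S_f[of u] that by (auto simp: \<phi>)
    show "\<phi> (madd (M\<lparr>mcar := S\<rparr>) u u') = madd (N\<lparr>mcar := {g p | p. f p \<in> S}\<rparr>) (\<phi> u) (\<phi> u')"
      if "u \<in> mcar (M\<lparr>mcar := S\<rparr>)" "u' \<in> mcar (M\<lparr>mcar := S\<rparr>)" for u u'
      using S_f[of u] S_f[of u'] that by (auto simp: \<phi> f_add g_add)
    show "\<phi> (mact (M\<lparr>mcar := S\<rparr>) u h) = mact (N\<lparr>mcar := {g p | p. f p \<in> S}\<rparr>) (\<phi> u) h"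
      if "u \<in> mcar (M\<lparr>mcar := S\<rparr>)" for u h
      using S_f[of u] that by (auto simp: \<phi> f_act g_act)
  qed
  moreover have "inj_on \<phi> S"
  proof (rule inj_onI)
    fix u u' assume "u \<in> S" "u' \<in> S" "\<phi> u = \<phi> u'"
    thus "u = u'" using S_f[of u] S_f[of u'] by (auto simp: \<phi> fg)
  qed
  moreover have "\<phi> ` S = {g p | p. f p \<in> S}"
  proof (intro equalityI subsetI)
    fix C assume "C \<in> \<phi> ` S"
    then obtain u where u: "u \<in> S" "C = \<phi> u" by (rule imageE)
    then obtain p where "u = f p" "f p \<in> S" using S_f by blast
    thus "C \<in> {g p | p. f p \<in> S}" using u(2) by (auto simp: \<phi>)
  next
    fix C assume "C \<in> {g p | p. f p \<in> S}"
    then obtain p where "C = g p" "f p \<in> S" by blast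
    thus "C \<in> \<phi> ` S" by (metis \<phi> imageI)
  qed
  ultimately show ?thesis
    unfolding riso_def bij_betw_def by auto
qed

lemma mixed_radix_digits_less:
  assumes "q < m * r * (d::nat)"
  shows "q mod d < d" "q div d div r < m" "q div d mod r < r"

proof -
  have d: "d > 0" using assms by (cases d) auto
  have p: "q div d < m * r" using assms by (simp add: less_mult_imp_div_less)
  have r: "r > 0" using p by (cases r) auto
  show "q mod d < d" using d by simp
  show "q div d div r < m" using p by (simp add: less_mult_imp_div_less)
  show "q div d mod r < r" using r by simp
qed

lemma mixed_radix_digits:
  assumes "l < m" "j < r" "i < (d::nat)"
  shows "(l*r+j)*d+i < m*r*d" "((l*r+j)*d+i) mod d = i" "((l*r+j)*d+i) div d div r = l" "((l*r+j)*d+i) div d mod r = j"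
proof -
  have a: "l*r+j < m*r"
  proof -
    have "l*r + j < l*r + r" using assms by simp
    also have "\<dots> = (l+1)*r" by simp
    also have "\<dots> \<le> m*r" using assms by (intro mult_right_mono) auto
    finally show ?thesis .
  qed
  have "(l*r+j)*d+i < (l*r+j)*d + d" using assms by simp
  also have "\<dots> = (l*r+j+1)*d" by simp
  also have "\<dots> \<le> m*r*d" using a by (intro mult_right_mono) auto
  finally show "(l*r+j)*d+i < m*r*d" .
  show "((l*r+j)*d+i) mod d = i" using assms by simp
  have "((l*r+j)*d+i) div d = l*r+j" using assms by simp
  thus "((l*r+j)*d+i) div d div r = l" "((l*r+j)*d+i) div d mod r = j" using assms by simp_all
qed



lemma spanned_by_annih:
  assumes "right_module A N" and span: "spanned_by A N d v"
    and kill: "\<forall>i<d. mact N (v i) g = mzero N"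
  shows "g \<in> annih UNIV N"
proof -
  interpret right_module A N by fact
  have "mact N w g = mzero N" if w: "w \<in> mcar N" for w
  proof -
    have v: "v i \<in> mcar N" if "i < d" for i
      using span that by (rule spanned_by_car)
    obtain c where c: "w = msum N (\<lambda>i. mact N (v i) (hscal A (c i))) d"
      using span w by (rule spanned_byE)
    have "mact N w g = msum N (\<lambda>i. mact N (mact N (v i) (hscal A (c i))) g) d"
      unfolding c by (rule msum_act) (use v act_closed in auto)
    also have "\<dots> = msum N (\<lambda>i. mact N (mact N (v i) g) (hscal A (c i))) d"
      by (rule msum_cong) (use v act_hscal_commute in blast)
    also have "\<dots> = mzero N"
      using kill by (simp add: zero_act msum_zero cong: msum_cong)
    finally show ?thesis .
  qed
  thus ?thesis unfolding annih_def by blast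
qed

text \<open>A coefficient family \<open>hs\<close>, with \<open>hs l j \<in> H\<close>, describes both the element
  \<open>(\<Sum>\<^sub>j x\<^sub>j hs l j)\<^sub>l\<close> of \<open>M\<^sup>m\<close> and the element \<open>(v\<^sub>i hs l j)\<^sub>l\<^sub>,\<^sub>j\<^sub>,\<^sub>i\<close> of \<open>N\<^sup>m\<^sup>r\<^sup>d\<close>;
  since \<open>Ann N \<subseteq> Ann M\<close>, the second determines the first.\<close>

locale sigma_transfer =
  fixes A :: "('k::field,'i::finite) hopf_data" and M :: "('i \<Rightarrow> 'k,'v) rmod" and N :: "('i \<Rightarrow> 'k,'w) rmod"
    and r d m :: nat and x :: "nat \<Rightarrow> 'v" and v :: "nat \<Rightarrow> 'w" and W :: "(nat \<Rightarrow> 'v) set"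
  assumes H: "hopf_algebra A" and RMM: "rmodule A M" and RMN: "rmodule A N"
    and gen: "generated_by M r x" and span: "spanned_by A N d v"
    and ann: "annih UNIV N \<subseteq> annih UNIV M"
    and SW: "submod W (dsum m M)"
begin

abbreviation "P \<equiv> dsum m M"
definition "D = m*r*d"
abbreviation "N' \<equiv> dsum D N"

definition combM :: "(nat \<Rightarrow> nat \<Rightarrow> 'i \<Rightarrow> 'k) \<Rightarrow> nat \<Rightarrow> 'v" where
  "combM hs = (\<lambda>l. if l < m then msum M (\<lambda>j. mact M (x j) (hs l j)) r else mzero M)"

text \<open>Index \<open>(l * r + j) * d + i\<close> of \<open>N\<^sup>D\<close> holds \<open>v\<^sub>i hs l j\<close>.\<close>

definition combN :: "(nat \<Rightarrow> nat \<Rightarrow> 'i \<Rightarrow> 'k) \<Rightarrow> nat \<Rightarrow> 'w" where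
  "combN hs = (\<lambda>q. if q < D then mact N (v (q mod d)) (hs (q div d div r) (q div d mod r)) else mzero N)"

sublocale rM: right_module A M using H RMM by unfold_locales
sublocale rN: right_module A N using H RMN by unfold_locales
sublocale rP: right_module A P using H dsum_rmodule rM.right_module_axioms by unfold_locales
sublocale rN': right_module A N' using H dsum_rmodule rN.right_module_axioms by unfold_locales
sublocale qP: quotient_module A P W using SW by unfold_locales

lemma x_car: "\<forall>j<r. x j \<in> mcar M"
  using gen unfolding generated_by_def by simp

lemma v_car: "\<forall>i<d. v i \<in> mcar N"
  using spanned_by_car[OF span] by blast


lemma combN_car: "combN hs \<in> mcar N'"
  unfolding combN_def dsum_def using mixed_radix_digits_less v_car rN.act_closed by (auto simp: D_def)

lemma combM_car: "combM hs \<in> mcar P"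
  unfolding combM_def dsum_def using x_car rM.act_closed by (auto intro!: rM.msum_closed)

lemma combN_add: "madd N' (combN hs) (combN hs') = combN (\<lambda>l j a. hs l j a + hs' l j a)"
  unfolding combN_def using mixed_radix_digits_less v_car by (auto simp: dsum_def fun_eq_iff D_def rN.act_hadd rN.zero_add rN.zero_closed)

lemma combM_add: "madd P (combM hs) (combM hs') = combM (\<lambda>l j a. hs l j a + hs' l j a)"
  unfolding combM_def using x_car
  by (auto simp: dsum_def fun_eq_iff rM.act_hadd rM.zero_add rM.zero_closed rM.act_closed rM.msum_add[symmetric] intro!: msum_cong)

lemma combN_act: "mact N' (combN hs) h = combN (\<lambda>l j. hmult A (hs l j) h)"
  unfolding combN_def using mixed_radix_digits_less v_car by (auto simp: dsum_def fun_eq_iff D_def rN.act_mult rN.zero_act)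

lemma combM_act: "mact P (combM hs) h = combM (\<lambda>l j. hmult A (hs l j) h)"
  unfolding combM_def using x_car
  by (auto simp: dsum_def fun_eq_iff rM.act_mult rM.zero_act rM.act_closed rM.msum_act intro!: msum_cong)

lemma combN_zero: "combN (\<lambda>l j a. 0) = mzero N'"
  unfolding combN_def using mixed_radix_digits_less v_car by (auto simp: dsum_def fun_eq_iff D_def rN.act_zero_h)

lemma combM_zero: "combM (\<lambda>l j a. 0) = mzero P"
  unfolding combM_def using x_car by (auto simp: dsum_def fun_eq_iff rM.act_zero_h rM.msum_zero cong: msum_cong)


lemma combN_eq_imp_combM_eq:
  assumes eq: "combN hs = combN hs'"
  shows "combM hs = combM hs'"
proof -
  have "mact M (x j) (hs l j) = mact M (x j) (hs' l j)" if l: "l < m" and j: "j < r" for l j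
  proof -
    let ?g = "\<lambda>a. hs l j a - hs' l j a"
    have "\<forall>i<d. mact N (v i) ?g = mzero N"
    proof (intro allI impI)
      fix i assume i: "i < d"
      have "mact N (v i) (hs l j) = mact N (v i) (hs' l j)"
        using fun_cong[OF eq, of "(l*r+j)*d+i"] mixed_radix_digits[OF l j i] unfolding combN_def D_def by simp
      thus "mact N (v i) ?g = mzero N"
        using rN.act_eq_iff_act_diff_eq_zero[of "v i"] v_car i by simp
    qed
    hence "?g \<in> annih UNIV N"
      by (rule spanned_by_annih[OF rN.right_module_axioms span])
    hence "?g \<in> annih UNIV M"
      using ann by blast
    hence "mact M (x j) ?g = mzero M"
      using x_car j unfolding annih_def by simp
    thus ?thesis
      using rM.act_eq_iff_act_diff_eq_zero[of "x j"] x_car j by simp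
  qed
  thus ?thesis unfolding combM_def by (auto simp: fun_eq_iff intro!: msum_cong)
qed

lemma combM_surj:
  assumes p: "p \<in> mcar P"
  shows "\<exists>hs. combM hs = p"
proof -
  have "\<forall>l. \<exists>hs. l < m \<longrightarrow> p l = msum M (\<lambda>j. mact M (x j) (hs j)) r"
    using p gen unfolding dsum_def generated_by_def by auto
  then obtain HS where HS: "\<And>l. l < m \<Longrightarrow> p l = msum M (\<lambda>j. mact M (x j) (HS l j)) r" by metis
  have "combM HS = p" unfolding combM_def using HS p by (auto simp: fun_eq_iff dsum_def)
  thus ?thesis by blast
qed



definition "WN = {combN hs | hs. combM hs \<in> W}"

lemma WN_submod: "submod WN N'"
  unfolding WN_def
  by (rule submod_transport[OF rP.right_module_axioms SW combM_car combM_add combM_act combM_zero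
        combN_car combN_add combN_act combN_zero])

sublocale qN': quotient_module A N' WN using WN_submod by unfold_locales


lemma combN_coset_eq_iff:
  "mcoset N' WN (combN hs) = mcoset N' WN (combN hs') \<longleftrightarrow> mcoset P W (combM hs) = mcoset P W (combM hs')"
proof
  assume "mcoset N' WN (combN hs) = mcoset N' WN (combN hs')"
  then obtain w where w: "w \<in> WN" "combN hs' = madd N' (combN hs) w" using qN'.coset_eq_iff combN_car by blast
  then obtain hs'' where hs'': "w = combN hs''" "combM hs'' \<in> W" using w(1) unfolding WN_def by blast
  have "combN hs' = combN (\<lambda>l j a. hs l j a + hs'' l j a)" unfolding w(2) hs''(1) combN_add ..
  hence "combM hs' = combM (\<lambda>l j a. hs l j a + hs'' l j a)" by (rule combN_eq_imp_combM_eq)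
  hence "combM hs' = madd P (combM hs) (combM hs'')" unfolding combM_add .
  thus "mcoset P W (combM hs) = mcoset P W (combM hs')" using qP.coset_eq_iff combM_car hs'' by blast
next
  assume "mcoset P W (combM hs) = mcoset P W (combM hs')"
  then obtain w where w: "w \<in> W" "combM hs' = madd P (combM hs) w" using qP.coset_eq_iff combM_car by blast
  let ?d = "\<lambda>l j a. hs' l j a - hs l j a"
  have e: "(\<lambda>l j a. hs l j a + ?d l j a) = hs'" by simp
  have "madd P (combM hs) (combM ?d) = madd P (combM hs) w" unfolding combM_add e w(2)[symmetric] ..
  hence "combM ?d = w" using rP.add_left_cancel combM_car qP.W_sub w by blast
  hence "combN ?d \<in> WN" using w unfolding WN_def by blast
  moreover have "combN hs' = madd N' (combN hs) (combN ?d)" unfolding combN_add e ..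
  ultimately show "mcoset N' WN (combN hs) = mcoset N' WN (combN hs')" using qN'.coset_eq_iff combN_car by blast
qed



lemma subquotient_transfer:
  assumes SS: "submod S (quot P W)"
  shows "\<exists>S'. submod S' (quot N' WN) \<and> riso ((quot P W)\<lparr>mcar := S\<rparr>) ((quot N' WN)\<lparr>mcar := S'\<rparr>)"
proof -
  let ?f = "\<lambda>hs. mcoset P W (combM hs)" and ?g = "\<lambda>hs. mcoset N' WN (combN hs)"
  have f_add: "madd (quot P W) (?f hs) (?f hs') = ?f (\<lambda>l j a. hs l j a + hs' l j a)" for hs hs'
    unfolding qP.coset_add[OF combM_car combM_car] combM_add ..
  have g_add: "madd (quot N' WN) (?g hs) (?g hs') = ?g (\<lambda>l j a. hs l j a + hs' l j a)" for hs hs'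
    unfolding qN'.coset_add[OF combN_car combN_car] combN_add ..
  have f_act: "mact (quot P W) (?f hs) h = ?f (\<lambda>l j. hmult A (hs l j) h)" for hs h
    unfolding qP.coset_act[OF combM_car] combM_act ..
  have g_act: "mact (quot N' WN) (?g hs) h = ?g (\<lambda>l j. hmult A (hs l j) h)" for hs h
    unfolding qN'.coset_act[OF combN_car] combN_act ..
  have f_zero: "?f (\<lambda>l j a. 0) = mzero (quot P W)"
    unfolding combM_zero qP.coset_zero quot_sel ..
  have g_zero: "?g (\<lambda>l j a. 0) = mzero (quot N' WN)"
    unfolding combN_zero qN'.coset_zero quot_sel ..
  have "right_module A (quot P W)"
    unfolding right_module_def using H qP.quot_rmodule by blast
  hence "submod {?g hs | hs. ?f hs \<in> S} (quot N' WN)"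
    by (rule submod_transport[OF _ SS qP.quot_carI[OF combM_car] f_add f_act f_zero
          qN'.quot_carI[OF combN_car] g_add g_act g_zero])
  moreover have "S \<subseteq> range ?f"
  proof
    fix C assume "C \<in> S"
    hence "C \<in> mcoset P W ` mcar P"
      using SS unfolding submod_def quot_sel by auto
    then obtain p where p: "p \<in> mcar P" "C = mcoset P W p" by (rule imageE)
    obtain hs where "combM hs = p"
      using combM_surj[OF p(1)] by (rule exE)
    thus "C \<in> range ?f" using p(2) by auto
  qed
  hence "riso ((quot P W)\<lparr>mcar := S\<rparr>) ((quot N' WN)\<lparr>mcar := {?g hs | hs. ?f hs \<in> S}\<rparr>)"
    by (rule riso_transport[OF f_add f_act g_add g_act combN_coset_eq_iff[symmetric]])
  ultimately show ?thesis by blast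
qed

end

theorem in_sigma_transfer:
  fixes A :: "('k::field,'i::finite) hopf_data" and M :: "('i \<Rightarrow> 'k,'v) rmod" and N :: "('i \<Rightarrow> 'k,'w) rmod"
    and X :: "('i \<Rightarrow> 'k, 'x) rmod"
  assumes "hopf_algebra A" "rmodule A M" "rmodule A N"
    and "generated_by M r x" "spanned_by A N d v" "annih UNIV N \<subseteq> annih UNIV M"
    and "in_sigma M X"
  shows "in_sigma N X"
proof -
  obtain m W S where SW: "submod W (dsum m M)" and SS: "submod S (quot (dsum m M) W)"
    and iso: "riso X ((quot (dsum m M) W)\<lparr>mcar := S\<rparr>)"
    using assms(7) unfolding in_sigma_def by blast
  interpret sigma_transfer A M N r d m x v W
    using assms(1-6) SW by unfold_locales
  show ?thesis
    unfolding in_sigma_def using WN_submod subquotient_transfer[OF SS] riso_trans[OF iso] by blast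
qed


section \<open>Annihilators\<close>

text \<open>The maps \<open>\<epsilon> \<otimes> id : H\<^sup>\<otimes>\<^sup>n\<^sup>+\<^sup>1 \<rightarrow> H\<^sup>\<otimes>\<^sup>n\<close> and \<open>t \<mapsto> 1 \<otimes> t\<close>, in coordinates.\<close>

definition counit_first :: "('k::field,'i::finite) hopf_data \<Rightarrow> nat \<Rightarrow> ('i list \<Rightarrow> 'k) \<Rightarrow> ('i list \<Rightarrow> 'k)" where
  "counit_first A n t = (\<lambda>ys. if length ys = n then \<Sum>x\<in>UNIV. t (x#ys) * scounit A x else 0)"

definition unit_first :: "('k::field,'i::finite) hopf_data \<Rightarrow> ('i list \<Rightarrow> 'k) \<Rightarrow> ('i list \<Rightarrow> 'k)" where
  "unit_first A s = (\<lambda>xs. case xs of [] \<Rightarrow> 0 | x#ys \<Rightarrow> sunit A x * s ys)"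

lemma counit_first_sum: "counit_first A n (\<lambda>xs. \<Sum>j\<in>S. f j xs) = (\<lambda>ys. \<Sum>j\<in>S. counit_first A n (f j) ys)"
  unfolding counit_first_def by (simp add: fun_eq_iff sum_distrib_right sum.swap[of _ S])

lemma counit_first_ptens:
  fixes A :: "('k::field,'i::finite) hopf_data"
  assumes "length F' = n"
  shows "counit_first A n (ptens (f0 # F')) = (\<lambda>ys. hcounit A f0 * ptens F' ys)"
proof (rule ext)
  fix ys :: "'i list"
  show "counit_first A n (ptens (f0 # F')) ys = hcounit A f0 * ptens F' ys"
  proof (cases "length ys = n")
    case True
    have "counit_first A n (ptens (f0 # F')) ys = (\<Sum>x\<in>UNIV. (f0 x * scounit A x) * (\<Prod>j<n. (F'!j) (ys!j)))"
      unfolding counit_first_def ptens_def using True assms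
      by (simp add: prod.lessThan_Suc_shift del: prod.lessThan_Suc) (simp add: mult_ac)
    also have "\<dots> = hcounit A f0 * ptens F' ys"
      unfolding hcounit_def ptens_def using True assms by (simp add: sum_distrib_right)
    finally show ?thesis .
  qed (use assms in \<open>simp add: counit_first_def ptens_def\<close>)
qed

lemma counit_first_Kn:
  assumes H: "hopf_algebra A" and t: "t \<in> Kn A R (Suc n)"
  shows "counit_first A n t \<in> Kn A R n"
proof -
  obtain m :: nat and F where F: "\<forall>j<m. length (F j) = Suc n \<and> (\<exists>i<Suc n. F j ! i \<in> RplusH A R)"
     and t: "t = (\<lambda>xs. \<Sum>j<m. ptens (F j) xs)"
    using t unfolding Kn_def mem_Collect_eq by blast
  have "\<forall>j\<in>{..<m}. counit_first A n (ptens (F j)) \<in> Kn A R n"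
  proof
    fix j assume "j \<in> {..<m}"
    then obtain i where i: "i < Suc n" "F j ! i \<in> RplusH A R" and len: "length (F j) = Suc n" using F by auto
    then obtain f0 F' where FF: "F j = f0 # F'" and len': "length F' = n" by (auto simp: length_Suc_conv)
    show "counit_first A n (ptens (F j)) \<in> Kn A R n"
    proof (cases i)
      case 0
      hence "hcounit A f0 = 0" using i FF hcounit_RplusH[OF H] by simp
      thus ?thesis unfolding FF counit_first_ptens[OF len'] using Kn_zero by simp
    next
      case (Suc i')
      hence "ptens F' \<in> Kn A R n" using i FF len' by (intro ptens_in_Kn[of _ _ i']) auto
      thus ?thesis unfolding FF counit_first_ptens[OF len'] by (rule Kn_smult)
    qed
  qed
  from Kn_sum[OF _ this] show ?thesis unfolding t counit_first_sum by simp
qed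

lemma unit_first_car: "s \<in> mcar (Htens A n) \<Longrightarrow> unit_first A s \<in> mcar (Htens A (Suc n))"
  unfolding Htens_def unit_first_def by (auto split: list.split)

lemma counit_first_tact_unit_first:
  fixes A :: "('k::field,'i::finite) hopf_data"
  assumes H: "hopf_algebra A" and s: "s \<in> mcar (Htens A n)"
  shows "counit_first A n (tact A (Suc n) (unit_first A s) h) = tact A n s h"
proof (rule ext)
  fix ys :: "'i list"
  show "counit_first A n (tact A (Suc n) (unit_first A s) h) ys = tact A n s h ys"
  proof (cases "length ys = n")
    case True
    define T where "T c = tpow_mult A n s (itcomul A n (basis_vec c)) ys" for c
    have inner: "tact A (Suc n) (unit_first A s) h (y#ys) =
        (\<Sum>a\<in>UNIV. \<Sum>b\<in>UNIV. smul A a b y * (sunit A a * (\<Sum>c\<in>UNIV. hcomul A h (b,c) * T c)))" for y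
    proof -
      have "tact A (Suc n) (unit_first A s) h (y#ys) = tpow_mult A (Suc n) (unit_first A s) (itcomul A (Suc n) h) (y#ys)"
        using True by (simp add: tact_tpow_mult)
      also have "\<dots> = (\<Sum>a\<in>UNIV. \<Sum>b\<in>UNIV. smul A a b y * tpow_mult A n (\<lambda>xs. sunit A a * s xs)
            (\<lambda>zs. \<Sum>c\<in>UNIV. hcomul A h (b,c) * itcomul A n (basis_vec c) zs) ys)"
        unfolding tpow_mult_Suc by (simp add: unit_first_def)
      also have "\<dots> = (\<Sum>a\<in>UNIV. \<Sum>b\<in>UNIV. smul A a b y * (sunit A a * (\<Sum>c\<in>UNIV. hcomul A h (b,c) * T c)))"
        unfolding T_def tpow_mult_smult_left tpow_mult_lin_right ..
      finally show ?thesis .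
    qed
    have "counit_first A n (tact A (Suc n) (unit_first A s) h) ys =
        (\<Sum>y\<in>UNIV. \<Sum>a\<in>UNIV. \<Sum>b\<in>UNIV. (smul A a b y * scounit A y) * (sunit A a * (\<Sum>c\<in>UNIV. hcomul A h (b,c) * T c)))"
      unfolding counit_first_def using True inner by (simp add: sum_distrib_left mult_ac)
    also have "\<dots> = (\<Sum>a\<in>UNIV. \<Sum>b\<in>UNIV. (\<Sum>y\<in>UNIV. smul A a b y * scounit A y) * (sunit A a * (\<Sum>c\<in>UNIV. hcomul A h (b,c) * T c)))"
      by (subst sum_swap_innermost_out[symmetric]) (simp add: sum_distrib_right)
    also have "\<dots> = (\<Sum>a\<in>UNIV. \<Sum>b\<in>UNIV. (sunit A a * scounit A a) * (scounit A b * (\<Sum>c\<in>UNIV. hcomul A h (b,c) * T c)))"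
      by (simp only: smul_scounit[OF H]) (simp add: mult_ac)
    also have "\<dots> = (\<Sum>a\<in>UNIV. sunit A a * scounit A a) * (\<Sum>b\<in>UNIV. scounit A b * (\<Sum>c\<in>UNIV. hcomul A h (b,c) * T c))"
      by (rule sum_product[symmetric])
    also have "\<dots> = (\<Sum>b\<in>UNIV. \<Sum>c\<in>UNIV. hcomul A h (b,c) * scounit A b * T c)"
      by (simp only: sunit_scounit[OF H] mult_1_left) (simp add: sum_distrib_left mult_ac)
    also have "\<dots> = (\<Sum>c\<in>UNIV. \<Sum>b\<in>UNIV. hcomul A h (b,c) * scounit A b * T c)"
      by (rule sum.swap)
    also have "\<dots> = (\<Sum>c\<in>UNIV. (\<Sum>b\<in>UNIV. hcomul A h (b,c) * scounit A b) * T c)"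
      by (simp add: sum_distrib_right)
    also have "\<dots> = (\<Sum>c\<in>UNIV. h c * T c)"
      using fun_cong[OF hopf_counit_left[OF H, of h]] by simp
    also have "\<dots> = tpow_mult A n s (itcomul A n h) ys"
    proof -
      have "(\<lambda>zs. \<Sum>c\<in>UNIV. h c * itcomul A n (basis_vec c) zs) = itcomul A n h"
        by (rule ext) (rule itcomul_basis_expansion[symmetric])
      thus ?thesis unfolding T_def tpow_mult_lin_right[symmetric] by simp
    qed
    finally show ?thesis using True by (simp add: tact_tpow_mult)
  qed (simp add: counit_first_def tact_def)
qed

lemma annih_Qtens_iff:
  assumes H: "hopf_algebra A"
  shows "h \<in> annih UNIV (Qtens A R n) \<longleftrightarrow> (\<forall>t\<in>mcar (Htens A n). tact A n t h \<in> Kn A R n)"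
proof -
  interpret q: quotient_module A "Htens A n" "Kn A R n" using Htens_quotient_module[OF H] .
  have "h \<in> annih UNIV (Qtens A R n) \<longleftrightarrow> (\<forall>t\<in>mcar (Htens A n). mact (quot (Htens A n) (Kn A R n)) (mcoset (Htens A n) (Kn A R n) t) h = Kn A R n)"
    unfolding annih_def Qtens_def quot_sel(1) quot_sel(3) by simp
  also have "\<dots> \<longleftrightarrow> (\<forall>t\<in>mcar (Htens A n). mcoset (Htens A n) (Kn A R n) (mact (Htens A n) t h) = Kn A R n)"
    using q.coset_act by (intro ball_cong) auto
  also have "\<dots> \<longleftrightarrow> (\<forall>t\<in>mcar (Htens A n). mact (Htens A n) t h \<in> Kn A R n)"
    using q.coset_W_iff q.act_closed by auto
  finally show ?thesis by (simp add: Htens_def)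
qed

lemma annih_Qtens_Suc_subset:
  assumes H: "hopf_algebra A"
  shows "annih UNIV (Qtens A R (Suc n)) \<subseteq> annih UNIV (Qtens A R n)"
proof
  fix h assume "h \<in> annih UNIV (Qtens A R (Suc n))"
  hence a: "\<forall>t\<in>mcar (Htens A (Suc n)). tact A (Suc n) t h \<in> Kn A R (Suc n)" using annih_Qtens_iff[OF H] by blast
  have "\<forall>s\<in>mcar (Htens A n). tact A n s h \<in> Kn A R n"
  proof
    fix s assume s: "s \<in> mcar (Htens A n)"
    have "counit_first A n (tact A (Suc n) (unit_first A s) h) \<in> Kn A R n"
      using counit_first_Kn[OF H] a unit_first_car[OF s] by blast
    thus "tact A n s h \<in> Kn A R n" unfolding counit_first_tact_unit_first[OF H s] .
  qed
  thus "h \<in> annih UNIV (Qtens A R n)" using annih_Qtens_iff[OF H] by blast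
qed

section \<open>Stabilisation of the annihilators\<close>

lemma fsum_apply: "(\<Sum>x\<in>S. g x) a = (\<Sum>x\<in>S. g x a)"
  by (induction S rule: infinite_finite_induct) auto

interpretation fun_vs: vector_space "\<lambda>(c::'k::field) (f::'i \<Rightarrow> 'k) a. c * f a"
  by unfold_locales (auto simp: fun_eq_iff algebra_simps)

lemma basis_vec_inj: "inj (basis_vec :: 'i \<Rightarrow> 'i \<Rightarrow> 'k::field)"
proof (rule injI)
  fix a b :: 'i assume "(basis_vec a :: 'i \<Rightarrow> 'k) = basis_vec b"
  hence "(basis_vec a :: 'i \<Rightarrow> 'k) a = basis_vec b a" by simp
  thus "a = b" by (simp add: basis_vec_def split: if_splits)
qed

lemma basis_span: "(f :: 'i::finite \<Rightarrow> 'k::field) \<in> fun_vs.span (range basis_vec)"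
proof -
  have "f = (\<Sum>a\<in>UNIV. (\<lambda>b. f a * basis_vec a b))"
    by (rule ext) (simp add: fsum_apply basis_vec_simps cong: if_cong)
  also have "\<dots> \<in> fun_vs.span (range basis_vec)"
    by (intro fun_vs.span_sum fun_vs.span_scale fun_vs.span_base) auto
  finally show ?thesis .
qed

lemma basis_indep: "fun_vs.independent (range (basis_vec :: 'i::finite \<Rightarrow> 'i \<Rightarrow> 'k::field))"
proof (rule fun_vs.independent_if_scalars_zero)
  show "finite (range (basis_vec :: 'i \<Rightarrow> 'i \<Rightarrow> 'k))" by simp
  fix f x assume s: "(\<Sum>x\<in>range (basis_vec :: 'i \<Rightarrow> 'i \<Rightarrow> 'k). (\<lambda>a. f x * x a)) = 0"
    and x: "x \<in> range (basis_vec :: 'i \<Rightarrow> 'i \<Rightarrow> 'k)"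
  then obtain c where c: "x = basis_vec c" by blast
  have "0 = (\<Sum>x\<in>range (basis_vec :: 'i \<Rightarrow> 'i \<Rightarrow> 'k). (\<lambda>a. f x * x a)) c" using s by simp
  also have "\<dots> = (\<Sum>b\<in>UNIV. f (basis_vec b) * basis_vec b c)"
    by (simp add: fsum_apply sum.reindex[OF basis_vec_inj])
  also have "\<dots> = f (basis_vec c)"
    by (simp add: basis_vec_simps cong: if_cong)
  finally show "f x = 0" using c by simp
qed

interpretation fun_fdvs: finite_dimensional_vector_space "\<lambda>(c::'k::field) (f::'i::finite \<Rightarrow> 'k) a. c * f a" "range basis_vec"
  by unfold_locales (auto simp: basis_indep basis_span)

lemma (in finite_dimensional_vector_space) decreasing_subspaces_stabilize:
  assumes sub: "\<And>n. subspace (V n)" and dec: "\<And>n. V (Suc n) \<subseteq> V n"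
  shows "\<exists>N. \<forall>m\<ge>N. V m = V N"
proof -
  have anti: "V m' \<subseteq> V m" if "m \<le> m'" for m m'
    using that dec by (induction m' rule: dec_induct) blast+
  obtain N where N: "\<And>n. dim (V N) \<le> dim (V n)"
    using ex_has_least_nat[of "\<lambda>_. True" 0 "\<lambda>n. dim (V n)"] by auto
  have "V m = V N" if "m \<ge> N" for m
    using subspace_dim_equal[OF sub sub anti[OF that] N] by simp
  thus ?thesis by blast
qed

lemma annih_subspace:
  fixes A :: "('k::field,'i::finite) hopf_data" and M :: "('i \<Rightarrow> 'k, 'v) rmod"
  assumes "right_module A M"
  shows "fun_vs.subspace (annih UNIV M)"
proof -
  interpret right_module A M by fact
  have "mact M u (\<lambda>a. c * h a) = mact M (mact M u (hscal A c)) h" if "u \<in> mcar M" for u c h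
    using act_mult[OF that, of "hscal A c" h] unfolding hmult_hscal_left[OF H] .
  thus ?thesis
    unfolding fun_vs.subspace_def annih_def zero_fun_def plus_fun_def
    by (auto simp: act_zero_h act_hadd zero_add zero_closed act_closed)
qed

lemma annih_Qtens_subspace:
  assumes "hopf_algebra A"
  shows "fun_vs.subspace (annih UNIV (Qtens A R n))"
  using assms Qtens_rmodule[OF assms] by (intro annih_subspace[of A]) (simp add: right_module_def)

lemma ellQ_stable:
  fixes A :: "('k::field,'i::finite) hopf_data"
  assumes H: "hopf_algebra A"
  shows "1 \<le> ellQ A R \<and> (\<forall>m\<ge>ellQ A R. annih UNIV (Qtens A R (ellQ A R)) = annih UNIV (Qtens A R m))"
proof -
  obtain N where N: "\<forall>m\<ge>N. annih UNIV (Qtens A R m) = annih UNIV (Qtens A R N)"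
    using fun_fdvs.decreasing_subspaces_stabilize[of "\<lambda>n. annih UNIV (Qtens A R n)",
        OF annih_Qtens_subspace[OF H] annih_Qtens_Suc_subset[OF H]]
    by (rule exE)
  show ?thesis
    unfolding ellQ_def
  proof (rule LeastI[of _ "Suc N"], intro conjI allI impI)
    fix m assume "Suc N \<le> m"
    hence "annih UNIV (Qtens A R m) = annih UNIV (Qtens A R N)"
      by (intro N[rule_format]) simp
    moreover have "annih UNIV (Qtens A R (Suc N)) = annih UNIV (Qtens A R N)"
      by (intro N[rule_format]) simp
    ultimately show "annih UNIV (Qtens A R (Suc N)) = annih UNIV (Qtens A R m)"
      by simp
  qed simp
qed

lemma in_sigma_Qtens_if_annih_subset:
  fixes A :: "('k::field,'i::finite) hopf_data" and X :: "('i \<Rightarrow> 'k, 'x) rmod"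
  assumes H: "hopf_algebra A"
    and ann: "annih UNIV (Qtens A R b) \<subseteq> annih UNIV (Qtens A R a)"
    and sig: "in_sigma (Qtens A R a) X"
  shows "in_sigma (Qtens A R b) X"
proof -
  obtain r x where "generated_by (Qtens A R a) r x"
    using Qtens_finitely_generated[OF H] by blast
  moreover obtain d v where "spanned_by A (Qtens A R b) d v"
    using Qtens_spanned[OF H] by blast
  ultimately show ?thesis
    using in_sigma_transfer[OF H Qtens_rmodule[OF H] Qtens_rmodule[OF H] _ _ ann sig] by blast
qed

theorem mainTheorem12:
  fixes A :: "('k::field, 'i::finite) hopf_data"
    and R :: "('i \<Rightarrow> 'k) set"
    and n :: nat
    and X :: "('i \<Rightarrow> 'k, 'x) rmod"
  assumes "hopf_algebra A"
    and "hopf_subalgebra A R"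
    and "rmodule A X"
  shows "in_sigma (Qtens A R (ellQ A R)) X \<longleftrightarrow> in_sigma (Qtens A R (ellQ A R + n)) X"
proof -
  have eq: "annih UNIV (Qtens A R (ellQ A R)) = annih UNIV (Qtens A R (ellQ A R + n))"
    using ellQ_stable[OF assms(1), of R] by simp
  show ?thesis
    using in_sigma_Qtens_if_annih_subset[OF assms(1)] eq by blast
qed

end
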